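(* Let $(\Gamma,M)$ be an E-GCM graph whose Coxeter group $W=W(\Gamma,M)$ is finite, with longest element $w_0$. Let $\lambda$ be a strongly dominant position and let $(\gamma_{i_1},\dots,\gamma_{i_l})$ be any game sequence for $\lambda$ (it is finite). For $1\le j\le l$ let $\beta_j:=s_{i_1}\cdots s_{i_{j-1}}.\alpha_{i_j}\in\Phi_M^+$. Then the following are equivalent: (1) for each $\alpha\in\Phi_M^+$, $\phi_\alpha=\phi_{\beta_j}$ for some $j$ (i.e. $\alpha$ is the positive root functional at some fired node $\gamma_{i_j}$); (2) each OA-connected component $(\Gamma',M')$ of $(\Gamma,M)$ is unital OA-cyclic with $f_{\Gamma',M'}=1$; (3) $(\Gamma,M)$ has no odd asymmetries; (4) $\ell(w_0)=|\Phi_M^+|=l$.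
   Context: E-GCM, E-GCM graph: $M$ real $n\times n$, $M_{ii}=2$, $M_{ij}\le0$ ($i\neq j$), $M_{ij}\ne0\iff M_{ji}\ne0$, and nonzero products $M_{ij}M_{ji}$ are $\ge4$ or equal $4\cos^2(\pi/m)$, $m\ge3$ integer; nodes $\gamma_i$, adjacent iff $M_{ij}\ne0$. Positions $\lambda\in\mathbb{R}^n$; strongly dominant means all $\lambda_i>0$; firing $\gamma_i$ (allowed if $\lambda_i>0$) replaces $\lambda_j$ by $\lambda_j-M_{ij}\lambda_i$; a game sequence is the sequence of nodes fired in a numbers game that fires nodes with positive population until none remain. Coxeter group $W(\Gamma,M)$: generators $s_i$, relations $s_i^2=e$, $(s_is_j)^{m_{ij}}=e$ ($i\ne j$) where $m_{ij}=k$ if $M_{ij}M_{ji}=4\cos^2(\pi/k)$ for an integer $k\ge2$ (so $m_{ij}=2$ iff $M_{ij}M_{ji}=0$) and $m_{ij}=\infty$ (no relation) if $M_{ij}M_{ji}\ge4$; $\ell$ is the length function. Quasi-standard geometric representation: $V$ real vector space with basis $(\alpha_i)_{i\in I_n}$, $W$ acting by $s_i.\alpha_j=\alpha_j-M_{ij}\alpha_i$. Roots $\Phi_M=\{w.\alpha_i\}$; $\alpha=\sum c_i\alpha_i$ is positive if all $c_i\ge0$; $\Phi_M^+$ is the set of positive roots. For a root $\alpha=\sum c_i\alpha_i$, its root functional is the linear form $\phi_\alpha=\sum c_ix_i$ in indeterminates $x_1,\dots,x_n$. Nodes $\gamma_i,\gamma_j$ are odd-adjacent if $m_{ij}$ is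 odd (finite); they form an odd asymmetry if they are odd-adjacent and $M_{ij}\ne M_{ji}$. For odd $m_{ij}$ put $K_{ji}=-M_{ji}/(2\cos(\pi/m_{ij}))$. An OA-path is a sequence $\mathcal{P}=[\gamma_{i_0},\dots,\gamma_{i_p}]$ ($p\ge0$) with consecutive nodes odd-adjacent; $\Pi_{\mathcal P}=K_{i_pi_{p-1}}\cdots K_{i_1i_0}$ ($=1$ if $p=0$); it is an OA-cycle if $\gamma_{i_p}=\gamma_{i_0}$. A set of nodes is unital OA-cyclic if $\Pi_{\mathcal C}=1$ for all OA-cycles $\mathcal C$ within it. An OA-connected component is the induced E-GCM subgraph $(\Gamma',M')$ on a maximal set of nodes any two of which are joined by an OA-path. For such a component that is unital OA-cyclic, $f_{\Gamma',M'}$ denotes the number of elements of $\{K\alpha_x: K\in\mathbb{R}\}\cap\Phi_M^+$ for a node $\gamma_x$ of the component (this number does not depend on $x$). *)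

theory Defs
  imports Complex_Main
begin

text \<open>Vectors of V (coefficients w.r.t. the basis
  of simple roots) and positions are functions 'n => real.\<close>

definition is_EGCM :: "('n::finite \<Rightarrow> 'n \<Rightarrow> real) \<Rightarrow> bool" where
  "is_EGCM M \<longleftrightarrow>
     (\<forall>i. M i i = 2) \<and>
     (\<forall>i j. i \<noteq> j \<longrightarrow> M i j \<le> 0) \<and>
     (\<forall>i j. M i j \<noteq> 0 \<longleftrightarrow> M j i \<noteq> 0) \<and>
     (\<forall>i j. i \<noteq> j \<longrightarrow> M i j * M j i \<noteq> 0 \<longrightarrow>
        (M i j * M j i \<ge> 4 \<or>
         (\<exists>m::nat. m \<ge> 3 \<and> M i j * M j i = 4 * (cos (pi / real m))^2)))"

text \<open>Coxeter exponent m_ij: Some k (finite) or None (infinity); m_ii = 1.\<close>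
definition coxeter_m :: "('n \<Rightarrow> 'n \<Rightarrow> real) \<Rightarrow> 'n \<Rightarrow> 'n \<Rightarrow> nat option" where
  "coxeter_m M i j =
     (if i = j then Some 1
      else if \<exists>k::nat. k \<ge> 2 \<and> M i j * M j i = 4 * (cos (pi / real k))^2
      then Some (LEAST k::nat. k \<ge> 2 \<and> M i j * M j i = 4 * (cos (pi / real k))^2)
      else None)"

definition coxeter_relators :: "('n \<Rightarrow> 'n \<Rightarrow> real) \<Rightarrow> 'n list set" where
  "coxeter_relators M =
     {[i, i] | i. True} \<union>
     {concat (replicate k [i, j]) | i j k. i \<noteq> j \<and> coxeter_m M i j = Some k}"

text \<open>Equality of words in the Coxeter group W(Gamma,M): the congruence
  generated by the relators (all generators are involutions, so positive
  words suffice).\<close>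
inductive cox_eq :: "('n \<Rightarrow> 'n \<Rightarrow> real) \<Rightarrow> 'n list \<Rightarrow> 'n list \<Rightarrow> bool"
  for M where
  cox_refl: "cox_eq M xs xs"
| cox_sym: "cox_eq M xs ys \<Longrightarrow> cox_eq M ys xs"
| cox_trans: "cox_eq M xs ys \<Longrightarrow> cox_eq M ys zs \<Longrightarrow> cox_eq M xs zs"
| cox_rel: "r \<in> coxeter_relators M \<Longrightarrow> cox_eq M (xs @ r @ ys) (xs @ ys)"

definition coxeter_group :: "('n \<Rightarrow> 'n \<Rightarrow> real) \<Rightarrow> 'n list set set" where
  "coxeter_group M = UNIV // {(xs, ys). cox_eq M xs ys}"

definition coxeter_length :: "('n \<Rightarrow> 'n \<Rightarrow> real) \<Rightarrow> 'n list set \<Rightarrow> nat" where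
  "coxeter_length M w = (LEAST k. k \<in> length ` w)"

definition longest_element :: "('n \<Rightarrow> 'n \<Rightarrow> real) \<Rightarrow> 'n list set" where
  "longest_element M = (THE w. w \<in> coxeter_group M \<and>
      (\<forall>w' \<in> coxeter_group M. coxeter_length M w' \<le> coxeter_length M w))"

definition simple_root :: "'n \<Rightarrow> 'n \<Rightarrow> real" where
  "simple_root i = (\<lambda>k. if k = i then 1 else 0)"

definition refl_act :: "('n::finite \<Rightarrow> 'n \<Rightarrow> real) \<Rightarrow> 'n \<Rightarrow> ('n \<Rightarrow> real) \<Rightarrow> ('n \<Rightarrow> real)" where
  "refl_act M i v = (\<lambda>k. v k - (if k = i then (\<Sum>j\<in>UNIV. M i j * v j) else 0))"

text \<open>Action of the word s_{w1} ... s_{wk} (rightmost generator acts first).\<close>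
definition word_act :: "('n::finite \<Rightarrow> 'n \<Rightarrow> real) \<Rightarrow> 'n list \<Rightarrow> ('n \<Rightarrow> real) \<Rightarrow> ('n \<Rightarrow> real)" where
  "word_act M ws v = foldr (refl_act M) ws v"

definition roots :: "('n::finite \<Rightarrow> 'n \<Rightarrow> real) \<Rightarrow> ('n \<Rightarrow> real) set" where
  "roots M = {word_act M ws (simple_root i) | ws i. True}"

definition pos_roots :: "('n::finite \<Rightarrow> 'n \<Rightarrow> real) \<Rightarrow> ('n \<Rightarrow> real) set" where
  "pos_roots M = {a \<in> roots M. \<forall>k. a k \<ge> 0}"

definition root_functional :: "('n::finite \<Rightarrow> real) \<Rightarrow> ('n \<Rightarrow> real) \<Rightarrow> real" where
  "root_functional a = (\<lambda>x. \<Sum>i\<in>UNIV. a i * x i)"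

definition strongly_dominant :: "('n \<Rightarrow> real) \<Rightarrow> bool" where
  "strongly_dominant lam \<longleftrightarrow> (\<forall>i. lam i > 0)"

definition fire :: "('n \<Rightarrow> 'n \<Rightarrow> real) \<Rightarrow> 'n \<Rightarrow> ('n \<Rightarrow> real) \<Rightarrow> ('n \<Rightarrow> real)" where
  "fire M i lam = (\<lambda>j. lam j - M i j * lam i)"

fun legal_play :: "('n \<Rightarrow> 'n \<Rightarrow> real) \<Rightarrow> ('n \<Rightarrow> real) \<Rightarrow> 'n list \<Rightarrow> bool" where
  "legal_play M lam [] = True"
| "legal_play M lam (i # is) = (lam i > 0 \<and> legal_play M (fire M i lam) is)"

definition play :: "('n \<Rightarrow> 'n \<Rightarrow> real) \<Rightarrow> ('n \<Rightarrow> real) \<Rightarrow> 'n list \<Rightarrow> ('n \<Rightarrow> real)" where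
  "play M lam seq = fold (fire M) seq lam"

definition game_sequence :: "('n \<Rightarrow> 'n \<Rightarrow> real) \<Rightarrow> ('n \<Rightarrow> real) \<Rightarrow> 'n list \<Rightarrow> bool" where
  "game_sequence M lam seq \<longleftrightarrow> legal_play M lam seq \<and> (\<forall>j. play M lam seq j \<le> 0)"

text \<open>beta_j = s_{i_1} ... s_{i_{j-1}} . alpha_{i_j}, for 1 <= j <= l.\<close>
definition game_root :: "('n::finite \<Rightarrow> 'n \<Rightarrow> real) \<Rightarrow> 'n list \<Rightarrow> nat \<Rightarrow> ('n \<Rightarrow> real)" where
  "game_root M seq j = word_act M (take (j - 1) seq) (simple_root (seq ! (j - 1)))"

definition odd_adjacent :: "('n \<Rightarrow> 'n \<Rightarrow> real) \<Rightarrow> 'n \<Rightarrow> 'n \<Rightarrow> bool" where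
  "odd_adjacent M i j \<longleftrightarrow> i \<noteq> j \<and> (\<exists>k. coxeter_m M i j = Some k \<and> odd k)"

definition odd_asymmetry :: "('n \<Rightarrow> 'n \<Rightarrow> real) \<Rightarrow> 'n \<Rightarrow> 'n \<Rightarrow> bool" where
  "odd_asymmetry M i j \<longleftrightarrow> odd_adjacent M i j \<and> M i j \<noteq> M j i"

definition oa_K :: "('n \<Rightarrow> 'n \<Rightarrow> real) \<Rightarrow> 'n \<Rightarrow> 'n \<Rightarrow> real" where
  "oa_K M j i = - M j i / (2 * cos (pi / real (the (coxeter_m M i j))))"

definition oa_path :: "('n \<Rightarrow> 'n \<Rightarrow> real) \<Rightarrow> 'n list \<Rightarrow> bool" where
  "oa_path M ps \<longleftrightarrow> ps \<noteq> [] \<and> (\<forall>k < length ps - 1. odd_adjacent M (ps ! k) (ps ! (k + 1)))"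

definition oa_weight :: "('n \<Rightarrow> 'n \<Rightarrow> real) \<Rightarrow> 'n list \<Rightarrow> real" where
  "oa_weight M ps = (\<Prod>k < length ps - 1. oa_K M (ps ! (k + 1)) (ps ! k))"

definition oa_cycle :: "('n \<Rightarrow> 'n \<Rightarrow> real) \<Rightarrow> 'n list \<Rightarrow> bool" where
  "oa_cycle M ps \<longleftrightarrow> oa_path M ps \<and> last ps = hd ps"

definition unital_OA_cyclic :: "('n \<Rightarrow> 'n \<Rightarrow> real) \<Rightarrow> 'n set \<Rightarrow> bool" where
  "unital_OA_cyclic M S \<longleftrightarrow> (\<forall>ps. oa_cycle M ps \<and> set ps \<subseteq> S \<longrightarrow> oa_weight M ps = 1)"

definition oa_component :: "('n \<Rightarrow> 'n \<Rightarrow> real) \<Rightarrow> 'n \<Rightarrow> 'n set" where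
  "oa_component M x = {y. \<exists>ps. oa_path M ps \<and> hd ps = x \<and> last ps = y}"

definition f_at :: "('n::finite \<Rightarrow> 'n \<Rightarrow> real) \<Rightarrow> 'n \<Rightarrow> nat" where
  "f_at M x = card ({v. \<exists>K::real. v = (\<lambda>k. K * simple_root x k)} \<inter> pos_roots M)"

end

(* The numbers game is the geometric representation seen from the dual side: the population
   of the node fired at step j is phi_{beta_j}(lambda).  Hence every beta_j is a positive root,
   the played word is reduced, and at the end of the game it maps every positive vector to a
   nonpositive one; so it is a reduced word of the longest element w_0, and undoing the game
   shows that every positive root is a positive multiple of some beta_j, the beta_j being
   pairwise non-proportional.  Thus (1) and card(Phi+) = l both say that each ray of positive
   roots contains only one root, i.e. f = 1 at every node.
   Along an odd edge the dihedral subgroup carries alpha_s to K_ts alpha_t, so an odd asymmetry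
   puts two roots on one ray, and f = 1 forces every OA-cycle to have weight 1.  Conversely, if
   K alpha_x = w alpha_y is a positive root, then w s_y w^-1 s_x is a unipotent element of the
   finite group W, hence a relation; relations use the letters of each OA-component an even
   number of times, so y lies in the OA-component of x, and without odd asymmetries an OA-path
   gives h with h alpha_x = K alpha_x, whence K = 1 by finiteness.
   Everything rests on the fact that roots are positive or negative, i.e. l(w s) > l(w) iff
   w alpha_s >= 0, proved by the usual reduction to rank two. *)

theory Submission
  imports Defs
begin

section \<open>The geometric representation\<close>

definition coroot_val :: "('n::finite \<Rightarrow> 'n \<Rightarrow> real) \<Rightarrow> 'n \<Rightarrow> ('n \<Rightarrow> real) \<Rightarrow> real" where
  "coroot_val M i v = (\<Sum>j\<in>UNIV. M i j * v j)"

lemma refl_act_eq: "refl_act M i v = (\<lambda>k. v k - coroot_val M i v * simple_root i k)"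
  by (auto simp: refl_act_def coroot_val_def simple_root_def)

lemma coroot_val_lin:
  "coroot_val M i (\<lambda>k. a * u k + b * w k) = a * coroot_val M i u + b * coroot_val M i w"
  by (simp add: coroot_val_def sum.distrib sum_distrib_left algebra_simps)

lemma coroot_val_diff: "coroot_val M i (\<lambda>k. v k - w k) = coroot_val M i v - coroot_val M i w"
  by (simp add: coroot_val_def sum_subtractf algebra_simps)

lemma coroot_val_simple_root: "coroot_val M i (simple_root j) = M i j"
  by (simp add: coroot_val_def simple_root_def if_distrib cong: if_cong)

lemma refl_act_lin:
  "refl_act M i (\<lambda>k. a * u k + b * w k) = (\<lambda>k. a * refl_act M i u k + b * refl_act M i w k)"
  by (auto simp: refl_act_eq coroot_val_lin algebra_simps)

lemma coroot_val_refl_act: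
  assumes "M i i = 2"
  shows "coroot_val M i (refl_act M i v) = - coroot_val M i v"
  using assms by (simp add: refl_act_eq coroot_val_diff coroot_val_lin[where b = 0, simplified]
      coroot_val_simple_root)

lemma refl_act_involution:
  assumes "M i i = 2"
  shows "refl_act M i (refl_act M i v) = v"
  using coroot_val_refl_act[of M i v, OF assms] by (subst refl_act_eq) (simp add: refl_act_eq algebra_simps)

lemma refl_act_simple_root: "M s s = 2 \<Longrightarrow> refl_act M s (simple_root s) = (\<lambda>k. - simple_root s k)"
  unfolding refl_act_eq coroot_val_simple_root by (auto simp: simple_root_def)

lemma word_act_Nil [simp]: "word_act M [] v = v"
  by (simp add: word_act_def)

lemma word_act_Cons [simp]: "word_act M (i # ws) v = refl_act M i (word_act M ws v)"
  by (simp add: word_act_def)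

lemma word_act_append: "word_act M (xs @ ys) v = word_act M xs (word_act M ys v)"
  by (simp add: word_act_def)

lemma word_act_lin:
  "word_act M ws (\<lambda>k. a * u k + b * w k) = (\<lambda>k. a * word_act M ws u k + b * word_act M ws w k)"
  by (induction ws) (simp_all add: refl_act_lin)

lemma word_act_scale: "word_act M ws (\<lambda>k. a * u k) = (\<lambda>k. a * word_act M ws u k)"
  using word_act_lin[of M ws a u 0 u] by simp

lemma word_act_neg: "word_act M ws (\<lambda>k. - u k) = (\<lambda>k. - word_act M ws u k)"
  using word_act_scale[of M ws "-1" u] by simp

lemma word_act_zero: "word_act M ws (\<lambda>k. 0) = (\<lambda>k. 0)"
  using word_act_scale[of M ws 0 "\<lambda>k. 0"] by simp

lemma word_act_sum:
  assumes "finite A"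
  shows "word_act M ws (\<lambda>l. \<Sum>k\<in>A. c k * u k l) = (\<lambda>l. \<Sum>k\<in>A. c k * word_act M ws (u k) l)"
  using assms
proof (induction A rule: finite_induct)
  case empty
  then show ?case by (simp add: word_act_zero)
next
  case (insert x F)
  then have "(\<lambda>l. \<Sum>k\<in>insert x F. c k * u k l) = (\<lambda>l. c x * u x l + 1 * (\<Sum>k\<in>F. c k * u k l))"
    by simp
  with insert show ?case
    by (simp only: word_act_lin) simp
qed

lemma word_act_expand: "word_act M ws v = (\<lambda>l. \<Sum>k\<in>UNIV. v k * word_act M ws (simple_root k) l)"
proof -
  have "v = (\<lambda>l. \<Sum>k\<in>UNIV. v k * simple_root k l)"
    by (simp add: simple_root_def if_distrib cong: if_cong)
  then show ?thesis
    using word_act_sum[of UNIV M ws v simple_root] by simp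
qed

lemma word_act_rev_cancel:
  assumes "\<forall>i. M i i = 2"
  shows "word_act M (rev ws) (word_act M ws v) = v"
  using assms by (induction ws arbitrary: v) (simp_all add: word_act_append refl_act_involution)

lemma word_act_cancel_rev:
  assumes "\<forall>i. M i i = 2"
  shows "word_act M ws (word_act M (rev ws) v) = v"
  using word_act_rev_cancel[of M "rev ws", OF assms] by simp

lemma word_act_root_nonzero:
  assumes "\<forall>i. M i i = 2"
  shows "word_act M w (simple_root s) \<noteq> (\<lambda>k. 0)"
proof
  assume "word_act M w (simple_root s) = (\<lambda>k. 0)"
  then have "simple_root s = (\<lambda>k. 0)"
    by (metis assms word_act_rev_cancel word_act_zero)
  then show False
    by (metis simple_root_def zero_neq_one)
qed

declare cox_eq.cox_trans [trans]

lemma cox_eq_context: "cox_eq M xs ys \<Longrightarrow> cox_eq M (as @ xs @ bs) (as @ ys @ bs)"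
proof (induction rule: cox_eq.induct)
  case (cox_rel r xs ys)
  then show ?case
    using cox_eq.cox_rel[of r M "as @ xs" "ys @ bs"] by simp
qed (auto intro: cox_eq.intros)

lemma cox_eq_append_left: "cox_eq M xs ys \<Longrightarrow> cox_eq M (as @ xs) (as @ ys)"
  using cox_eq_context[of M xs ys as "[]"] by simp

lemma cox_eq_append_right: "cox_eq M xs ys \<Longrightarrow> cox_eq M (xs @ bs) (ys @ bs)"
  using cox_eq_context[of M xs ys "[]" bs] by simp

lemma cox_eq_append: "cox_eq M xs ys \<Longrightarrow> cox_eq M xs' ys' \<Longrightarrow> cox_eq M (xs @ xs') (ys @ ys')"
  by (meson cox_eq.cox_trans cox_eq_append_left cox_eq_append_right)

lemma cox_eq_square: "cox_eq M (xs @ [s, s] @ ys) (xs @ ys)"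
  by (rule cox_eq.cox_rel) (auto simp: coxeter_relators_def)

lemma cox_eq_append_rev: "cox_eq M (xs @ rev xs) []"
proof (induction xs rule: rev_induct)
  case (snoc x xs)
  have "cox_eq M ((xs @ [x]) @ rev (xs @ [x])) (xs @ rev xs)"
    using cox_eq_square[of M xs x "rev xs"] by simp
  with snoc show ?case
    using cox_eq.cox_trans by blast
qed (simp add: cox_eq.cox_refl)

lemma cox_eq_rev_append: "cox_eq M (rev xs @ xs) []"
  using cox_eq_append_rev[of M "rev xs"] by simp

lemma cox_eq_inverse: "cox_eq M (xs @ ys) [] \<Longrightarrow> cox_eq M ys (rev xs)"
  using cox_eq_append_left[of M "xs @ ys" "[]" "rev xs"]
    cox_eq_append_right[OF cox_eq_rev_append[of M xs], of ys]
  by (auto intro: cox_eq.cox_trans cox_eq.cox_sym)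

lemma coxeter_m_sym: "coxeter_m M i j = coxeter_m M j i"
  by (cases "i = j") (simp_all add: coxeter_m_def mult.commute eq_commute[of i j])

lemma concat_replicate_commute: "concat (replicate k xs) @ xs = xs @ concat (replicate k xs)"
  by (induction k) auto

lemma rev_concat_replicate_pair: "rev (concat (replicate k [i, j])) = concat (replicate k [j, i])"
  by (induction k) (simp_all add: concat_replicate_commute)

lemma rev_relator: "r \<in> coxeter_relators M \<Longrightarrow> rev r \<in> coxeter_relators M"
  unfolding coxeter_relators_def
  by (auto simp: rev_concat_replicate_pair) (metis coxeter_m_sym)

lemma cox_eq_rev: "cox_eq M xs ys \<Longrightarrow> cox_eq M (rev xs) (rev ys)"
proof (induction rule: cox_eq.induct)
  case (cox_rel r xs ys)
  then show ?case
    using cox_eq.cox_rel[of "rev r" M "rev ys" "rev xs"] rev_relator[of r M] by simp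
qed (auto intro: cox_eq.intros)

lemma even_length_relator: "r \<in> coxeter_relators M \<Longrightarrow> even (length r)"
  by (auto simp: coxeter_relators_def length_concat sum_list_replicate)

lemma cox_eq_even_length: "cox_eq M xs ys \<Longrightarrow> even (length xs) = even (length ys)"
  by (induction rule: cox_eq.induct) (auto dest: even_length_relator)

definition word_len :: "('n \<Rightarrow> 'n \<Rightarrow> real) \<Rightarrow> 'n list \<Rightarrow> nat" where
  "word_len M xs = (LEAST k. \<exists>ys. cox_eq M xs ys \<and> length ys = k)"

definition word_len_in :: "('n \<Rightarrow> 'n \<Rightarrow> real) \<Rightarrow> 'n set \<Rightarrow> 'n list \<Rightarrow> nat" where
  "word_len_in M I xs = (LEAST k. \<exists>ys. set ys \<subseteq> I \<and> cox_eq M xs ys \<and> length ys = k)"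

lemma word_len_witness: "\<exists>ys. cox_eq M xs ys \<and> length ys = word_len M xs"
  unfolding word_len_def by (rule LeastI_ex) (auto intro: cox_eq.cox_refl)

lemma word_len_le: "cox_eq M xs ys \<Longrightarrow> word_len M xs \<le> length ys"
  unfolding word_len_def by (rule Least_le) auto

lemma word_len_le_length: "word_len M xs \<le> length xs"
  by (rule word_len_le) (rule cox_eq.cox_refl)

lemma word_len_Nil [simp]: "word_len M [] = 0"
  using word_len_le_length[of M "[]"] by simp

lemma cox_eq_Nil_if_word_len_0: "word_len M xs = 0 \<Longrightarrow> cox_eq M xs []"
  using word_len_witness[of M xs] by auto

lemma word_len_le_if_cox_eq: "cox_eq M xs ys \<Longrightarrow> word_len M xs \<le> word_len M ys"
  by (metis cox_eq.cox_trans word_len_le word_len_witness)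

lemma word_len_cong: "cox_eq M xs ys \<Longrightarrow> word_len M xs = word_len M ys"
  by (simp add: cox_eq.cox_sym le_antisym word_len_le_if_cox_eq)

lemma word_len_append_le: "word_len M (xs @ ys) \<le> word_len M xs + word_len M ys"
proof -
  obtain xs' ys' where "cox_eq M xs xs'" "length xs' = word_len M xs"
    and "cox_eq M ys ys'" "length ys' = word_len M ys"
    using word_len_witness by metis
  then show ?thesis
    using word_len_le[OF cox_eq_append, of M xs xs' ys ys'] by simp
qed

lemma even_word_len_iff: "even (word_len M xs) = even (length xs)"
  using word_len_witness[of M xs] cox_eq_even_length by metis

lemma word_len_singleton: "word_len M [s] = 1"
  using word_len_le_length[of M "[s]"] even_word_len_iff[of M "[s]"] by (cases "word_len M [s]") auto

lemma word_len_snoc: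
  "word_len M (xs @ [s]) = Suc (word_len M xs) \<or> Suc (word_len M (xs @ [s])) = word_len M xs"
proof -
  have "word_len M xs = word_len M ((xs @ [s]) @ [s])"
    using word_len_cong[OF cox_eq_square[of M xs s "[]"]] by simp
  then have "word_len M xs \<le> word_len M (xs @ [s]) + 1"
    using word_len_append_le[of M "xs @ [s]" "[s]"] word_len_singleton[of M s] by simp
  moreover have "word_len M (xs @ [s]) \<le> word_len M xs + 1"
    using word_len_singleton[of M s] word_len_append_le[of M xs "[s]"] by simp
  moreover have "even (word_len M (xs @ [s])) \<noteq> even (word_len M xs)"
    using even_word_len_iff[of M] by simp
  ultimately show ?thesis
    by (cases "word_len M (xs @ [s]) = word_len M xs") auto
qed

lemma word_len_rev_le: "word_len M (rev xs) \<le> word_len M xs"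
  using word_len_witness[of M xs] word_len_le[OF cox_eq_rev, of M xs] by force

lemma word_len_rev: "word_len M (rev xs) = word_len M xs"
  using word_len_rev_le[of M xs] word_len_rev_le[of M "rev xs"] by simp

lemma reduced_suffix:
  assumes "0 < word_len M w"
  obtains w' s where "cox_eq M w (w' @ [s])" "word_len M w' < word_len M (w' @ [s])"
    "word_len M (w' @ [s]) = word_len M w"
proof -
  obtain ws where ws: "cox_eq M w ws" "length ws = word_len M w"
    using word_len_witness by blast
  with assms obtain w' s where "ws = w' @ [s]"
    by (metis length_0_conv less_irrefl rev_exhaust)
  moreover have "word_len M w' \<le> word_len M w - 1"
    using word_len_le_length[of M w'] ws calculation by simp
  ultimately show ?thesis
    using that ws assms word_len_cong[OF ws(1)] by simp
qed

lemma word_len_in_witness: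
  "set xs \<subseteq> I \<Longrightarrow> \<exists>ys. set ys \<subseteq> I \<and> cox_eq M xs ys \<and> length ys = word_len_in M I xs"
  unfolding word_len_in_def by (rule LeastI_ex) (auto intro: cox_eq.cox_refl)

lemma word_len_in_le: "set ys \<subseteq> I \<Longrightarrow> cox_eq M xs ys \<Longrightarrow> word_len_in M I xs \<le> length ys"
  unfolding word_len_in_def by (rule Least_le) auto

lemma word_len_in_le_if_cox_eq:
  "cox_eq M xs ys \<Longrightarrow> set ys \<subseteq> I \<Longrightarrow> word_len_in M I xs \<le> word_len_in M I ys"
  by (metis cox_eq.cox_trans word_len_in_le word_len_in_witness)

lemma word_len_in_cong:
  "cox_eq M xs ys \<Longrightarrow> set xs \<subseteq> I \<Longrightarrow> set ys \<subseteq> I \<Longrightarrow> word_len_in M I xs = word_len_in M I ys"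
  by (simp add: cox_eq.cox_sym le_antisym word_len_in_le_if_cox_eq)

lemma word_len_le_word_len_in: "set xs \<subseteq> I \<Longrightarrow> word_len M xs \<le> word_len_in M I xs"
  using word_len_in_witness[of xs I M] word_len_le[of M xs] by fastforce

lemma word_len_in_Cons:
  assumes "set xs \<subseteq> I" "s \<in> I"
  shows "word_len_in M I (s # xs) \<le> Suc (word_len_in M I xs)"
proof -
  obtain ys where "set ys \<subseteq> I" "cox_eq M xs ys" "length ys = word_len_in M I xs"
    using word_len_in_witness[OF assms(1)] by blast
  then show ?thesis
    using word_len_in_le[of "s # ys" I M "s # xs"] cox_eq_append_left[of M xs ys "[s]"] assms(2)
    by simp
qed

section \<open>Rank two\<close>

lemma is_EGCM_diag: "is_EGCM M \<Longrightarrow> M i i = 2"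
  by (simp add: is_EGCM_def)

lemma is_EGCM_diag_all: "is_EGCM M \<Longrightarrow> \<forall>i. M i i = 2"
  by (simp add: is_EGCM_def)

lemma is_EGCM_off_diag: "is_EGCM M \<Longrightarrow> i \<noteq> j \<Longrightarrow> M i j \<le> 0"
  by (simp add: is_EGCM_def)

lemma is_EGCM_zero_sym: "is_EGCM M \<Longrightarrow> M i j = 0 \<longleftrightarrow> M j i = 0"
  by (auto simp: is_EGCM_def)

lemma is_EGCM_product_nonneg: "is_EGCM M \<Longrightarrow> i \<noteq> j \<Longrightarrow> 0 \<le> M i j * M j i"
  using is_EGCM_off_diag[of M i j] is_EGCM_off_diag[of M j i] by (simp add: mult_nonpos_nonpos)

lemma pi_div_nat_bounds:
  assumes "(m::nat) \<ge> 2"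
  shows "sin (pi / real m) > 0" "cos (pi / real m) \<ge> 0" "cos (pi / real m) < 1"
proof -
  have m: "real m \<ge> 2" using assms by simp
  then have pos: "pi / real m > 0" by simp
  have half: "pi / real m \<le> pi / 2"
    using m by (intro divide_left_mono) auto
  show "sin (pi / real m) > 0"
    using pos half pi_gt_zero by (intro sin_gt_zero) linarith+
  show "cos (pi / real m) \<ge> 0"
    using pos half by (intro cos_ge_zero) auto
  have "cos (pi / real m) < cos 0"
    using pos half pi_gt_zero by (intro cos_monotone_0_pi) linarith+
  then show "cos (pi / real m) < 1" by simp
qed

lemma coxeter_m_SomeD:
  assumes "i \<noteq> j" "coxeter_m M i j = Some m"
  shows "m \<ge> 2 \<and> M i j * M j i = 4 * (cos (pi / real m))^2"
proof -
  have ex: "\<exists>k::nat. k \<ge> 2 \<and> M i j * M j i = 4 * (cos (pi / real k))^2"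
    using assms by (auto simp: coxeter_m_def split: if_splits)
  then have "m = (LEAST k::nat. k \<ge> 2 \<and> M i j * M j i = 4 * (cos (pi / real k))^2)"
    using assms by (auto simp: coxeter_m_def)
  then show ?thesis
    using LeastI_ex[OF ex] by simp
qed

lemma coxeter_m_product_zero:
  assumes "i \<noteq> j" "M i j * M j i = 0"
  shows "coxeter_m M i j = Some 2"
proof -
  have "(LEAST k::nat. k \<ge> 2 \<and> M i j * M j i = 4 * (cos (pi / real k))^2) = 2"
    by (rule Least_equality) (auto simp: assms(2))
  moreover have "\<exists>k::nat. k \<ge> 2 \<and> M i j * M j i = 4 * (cos (pi / real k))^2"
    by (rule exI[of _ 2]) (simp add: assms(2))
  ultimately show ?thesis
    using assms(1) by (simp add: coxeter_m_def)
qed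

lemma coxeter_m_NoneD:
  assumes "is_EGCM M" "i \<noteq> j" "coxeter_m M i j = None"
  shows "M i j * M j i \<ge> 4"
proof -
  have none: "\<not> (\<exists>k::nat. k \<ge> 2 \<and> M i j * M j i = 4 * (cos (pi / real k))^2)"
    using assms(2,3) by (auto simp: coxeter_m_def split: if_splits)
  then have "M i j * M j i \<noteq> 0"
    using coxeter_m_product_zero[OF assms(2)] assms(3) by auto
  then have "M i j * M j i \<ge> 4 \<or> (\<exists>m::nat. m \<ge> 3 \<and> M i j * M j i = 4 * (cos (pi / real m))^2)"
    using assms(1,2) unfolding is_EGCM_def by blast
  then show ?thesis
  proof
    assume "\<exists>m::nat. m \<ge> 3 \<and> M i j * M j i = 4 * (cos (pi / real m))^2"
    then have "\<exists>m::nat. m \<ge> 2 \<and> M i j * M j i = 4 * (cos (pi / real m))^2"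
      by (metis Suc_leD numeral_3_eq_3 numeral_2_eq_2)
    with none show ?thesis ..
  qed
qed

lemma coxeter_m_Some_product_pos:
  assumes "i \<noteq> j" "coxeter_m M i j = Some m" "M i j * M j i > 0"
  shows "m \<ge> 3" "2 * cos (pi / real m) > 0"
    "(2 * cos (pi / real m)) * (2 * cos (pi / real m)) = M i j * M j i"
proof -
  have m: "m \<ge> 2" "M i j * M j i = 4 * (cos (pi / real m))^2"
    using coxeter_m_SomeD[OF assms(1,2)] by auto
  then show "(2 * cos (pi / real m)) * (2 * cos (pi / real m)) = M i j * M j i"
    by (simp add: power2_eq_square)
  from m assms(3) have "cos (pi / real m) \<noteq> 0" by auto
  then show "2 * cos (pi / real m) > 0"
    using pi_div_nat_bounds(2)[OF m(1)] by simp
  show "m \<ge> 3"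
    using m assms(3) by (cases "m = 2") auto
qed

text \<open>A Chebyshev polynomial of the second kind, evaluated at \<open>d/2\<close>: the coefficients of the
  roots of a rank two subsystem with \<open>d\<^sup>2 = M\<^sub>s\<^sub>t M\<^sub>t\<^sub>s\<close>.\<close>

fun cheb :: "real \<Rightarrow> nat \<Rightarrow> real" where
  "cheb d 0 = 0"
| "cheb d (Suc 0) = 1"
| "cheb d (Suc (Suc k)) = d * cheb d (Suc k) - cheb d k"

lemma cheb_cos:
  assumes "sin x \<noteq> 0"
  shows "cheb (2 * cos x) k = sin (real k * x) / sin x"
proof -
  have sin_rec: "sin (real (Suc (Suc k)) * x) = 2 * cos x * sin (real (Suc k) * x) - sin (real k * x)"
    for k
  proof -
    have "real (Suc (Suc k)) * x = real (Suc k) * x + x" "real k * x = real (Suc k) * x - x"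
      by (simp_all add: algebra_simps)
    then show ?thesis
      by (simp only: sin_add sin_diff) (simp add: algebra_simps)
  qed
  have "cheb (2 * cos x) k = sin (real k * x) / sin x \<and>
    cheb (2 * cos x) (Suc k) = sin (real (Suc k) * x) / sin x"
  proof (induction k)
    case (Suc k)
    then show ?case
      using assms by (simp only: cheb.simps sin_rec) (simp add: field_simps)
  qed (use assms in simp)
  then show ?thesis ..
qed

lemma cheb_nonneg:
  assumes "d \<ge> 2"
  shows "cheb d k \<ge> 0"
proof -
  have "cheb d k \<ge> 0 \<and> cheb d (Suc k) - cheb d k \<ge> 1"
  proof (induction k)
    case (Suc k)
    have "d * cheb d (Suc k) = (d - 2) * cheb d (Suc k) + 2 * cheb d (Suc k)"
      by algebra
    moreover have "(d - 2) * cheb d (Suc k) \<ge> 0"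
      using Suc assms by simp
    ultimately show ?case
      using Suc by simp
  qed simp
  then show ?thesis ..
qed

lemma cheb_pi_div:
  assumes "(m::nat) \<ge> 2"
  defines "d \<equiv> 2 * cos (pi / real m)"
  shows "cheb d m = 0" "cheb d (m - 1) = 1" "cheb d (2 * m) = 0" "cheb d (Suc (2 * m)) = 1"
    "k \<le> m \<Longrightarrow> cheb d k \<ge> 0"
proof -
  let ?x = "pi / real m"
  have s: "sin ?x > 0"
    using pi_div_nat_bounds[OF assms(1)] by simp
  have m0: "real m \<noteq> 0"
    using assms by simp
  show "cheb d m = 0"
    using s m0 by (simp add: d_def cheb_cos)
  have "real (m - 1) * ?x = pi - ?x"
    using assms m0 by (simp add: of_nat_diff field_simps)
  then show "cheb d (m - 1) = 1"
    using s by (simp add: d_def cheb_cos)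
  have "real (2 * m) * ?x = 2 * pi"
    using m0 by simp
  then show "cheb d (2 * m) = 0"
    using s by (simp add: d_def cheb_cos)
  have "real (Suc (2 * m)) * ?x = ?x + 2 * pi"
    using m0 by (simp add: field_simps)
  then show "cheb d (Suc (2 * m)) = 1"
    using s by (simp add: d_def cheb_cos sin_add)
  assume "k \<le> m"
  then have "real k * ?x \<le> pi"
    using m0 by (simp add: field_simps)
  then have "sin (real k * ?x) \<ge> 0"
    by (intro sin_ge_zero) auto
  then show "cheb d k \<ge> 0"
    using s by (simp add: d_def cheb_cos)
qed

text \<open>\<open>alt_word s t k\<close> is the alternating word of length \<open>k\<close> ending in \<open>t\<close>, so that
  \<open>t\<close> acts first.\<close>

fun alt_word :: "'n \<Rightarrow> 'n \<Rightarrow> nat \<Rightarrow> 'n list" where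
  "alt_word s t 0 = []"
| "alt_word s t (Suc k) = (if even k then t else s) # alt_word s t k"

lemma length_alt_word [simp]: "length (alt_word s t k) = k"
  by (induction k) auto

lemma set_alt_word: "set (alt_word s t k) \<subseteq> {s, t}"
  by (induction k) auto

lemma alt_word_add:
  "alt_word s t (j + k) = (if even k then alt_word s t j else alt_word t s j) @ alt_word s t k"
  by (induction j) auto

lemma alt_word_Suc_snoc: "alt_word s t (Suc k) = alt_word t s k @ [t]"
  using alt_word_add[of s t k 1] by simp

lemma rev_alt_word: "rev (alt_word s t k) = (if even k then alt_word t s k else alt_word s t k)"
proof (induction k arbitrary: s t)
  case (Suc k)
  have "rev (alt_word s t (Suc k)) = t # rev (alt_word t s k)"
    by (simp only: alt_word_Suc_snoc rev.simps rev_append) simp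
  then show ?case
    using Suc[of t s] by simp
qed simp

lemma alt_word_double: "alt_word s t (2 * m) = concat (replicate m [s, t])"
proof (induction m)
  case (Suc m)
  have "2 * Suc m = Suc (Suc (2 * m))" by simp
  then show ?case
    using Suc by simp
qed simp

lemma cox_eq_braid:
  assumes "s \<noteq> t" "coxeter_m M s t = Some m"
  shows "cox_eq M (alt_word s t m) (alt_word t s m)"
proof -
  have "concat (replicate m [s, t]) \<in> coxeter_relators M"
    using assms unfolding coxeter_relators_def by blast
  from cox_eq.cox_rel[OF this, of "[]" "[]"]
  have "cox_eq M ((if even m then alt_word s t m else alt_word t s m) @ alt_word s t m) []"
    using alt_word_add[of s t m m] by (simp add: alt_word_double[symmetric] mult_2)
  from cox_eq_inverse[OF this] show ?thesis
    by (cases "even m") (simp_all add: rev_alt_word)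
qed

definition comb2 :: "'n \<Rightarrow> 'n \<Rightarrow> real \<Rightarrow> real \<Rightarrow> ('n \<Rightarrow> real)" where
  "comb2 s t p q = (\<lambda>l. p * simple_root s l + q * simple_root t l)"

lemma simple_root_comb2: "simple_root s = comb2 s t 1 0"
  by (simp add: comb2_def)

lemma coroot_val_comb2:
  "coroot_val M i (comb2 s t p q) = p * M i s + q * M i t"
  unfolding comb2_def coroot_val_lin coroot_val_simple_root ..

lemma refl_act_comb2_left:
  assumes "s \<noteq> t" "M s s = 2"
  shows "refl_act M s (comb2 s t p q) = comb2 s t (- p - M s t * q) q"
  unfolding refl_act_eq coroot_val_comb2
  using assms by (auto simp: comb2_def simple_root_def algebra_simps)

lemma refl_act_comb2_right:
  assumes "s \<noteq> t" "M t t = 2"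
  shows "refl_act M t (comb2 s t p q) = comb2 s t p (- q - M t s * p)"
  unfolding refl_act_eq coroot_val_comb2
  using assms by (auto simp: comb2_def simple_root_def algebra_simps)

lemma dihedral_orbit:
  assumes st: "s \<noteq> t" "M s s = 2" "M t t = 2"
    and d: "d > 0" "d * d = M s t * M t s"
  defines "K \<equiv> - M t s / d"
  shows "word_act M (alt_word s t k) (simple_root s) =
    (if even k then comb2 s t (cheb d (Suc k)) (K * cheb d k)
     else comb2 s t (cheb d k) (K * cheb d (Suc k)))"
proof (induction k)
  case 0
  then show ?case by (simp add: simple_root_comb2[of s t])
next
  case (Suc k)
  have Kd: "- M t s = K * d"
    using d by (simp add: K_def)
  have "- M s t * K = (M s t * M t s) / d"
    by (simp add: K_def)
  also have "\<dots> = d"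
    using d by (metis nonzero_mult_div_cancel_right less_irrefl)
  finally have dK: "M s t * K = - d" by simp
  show ?case
  proof (cases "even k")
    case True
    with Suc have "word_act M (alt_word s t (Suc k)) (simple_root s) =
        comb2 s t (cheb d (Suc k)) (- (K * cheb d k) + (- M t s) * cheb d (Suc k))"
      using refl_act_comb2_right[where M = M, OF st(1) st(3)] by simp
    with True show ?thesis
      by (simp add: Kd algebra_simps)
  next
    case False
    with Suc have "word_act M (alt_word s t (Suc k)) (simple_root s) =
        comb2 s t (- cheb d k - M s t * (K * cheb d (Suc k))) (K * cheb d (Suc k))"
      using refl_act_comb2_left[where M = M, OF st(1) st(2)] by simp
    moreover have "- cheb d k - M s t * (K * cheb d (Suc k)) = cheb d (Suc (Suc k))"
      using dK by (simp add: mult.assoc[symmetric])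
    ultimately show ?thesis
      using False by simp
  qed
qed

text \<open>The Cartan block of \<open>i, j\<close> is invertible, so the space is spanned by \<open>\<alpha>\<^sub>i\<close>, \<open>\<alpha>\<^sub>j\<close>
  and the common kernel of the two coroots, which \<open>s\<^sub>i\<close> and \<open>s\<^sub>j\<close> fix pointwise.\<close>

lemma word_act_id_if_fixes_simple_roots:
  assumes "M i i = 2" "M j j = 2" "i \<noteq> j" "M i j * M j i \<noteq> 4" "set x \<subseteq> {i, j}"
    and fix_i: "word_act M x (simple_root i) = simple_root i"
    and fix_j: "word_act M x (simple_root j) = simple_root j"
  shows "word_act M x v = v"
proof -
  define D where "D = 4 - M i j * M j i"
  define a where "a = coroot_val M i v"
  define b where "b = coroot_val M j v"
  define p where "p = (2 * a - M i j * b) / D"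
  define q where "q = (2 * b - M j i * a) / D"
  define u where "u = (\<lambda>k. v k - comb2 i j p q k)"
  have D: "D \<noteq> 0"
    using assms(4) by (simp add: D_def)
  have "p * 2 + q * M i j = ((2 * a - M i j * b) * 2 + (2 * b - M j i * a) * M i j) / D"
    "p * M j i + q * 2 = ((2 * a - M i j * b) * M j i + (2 * b - M j i * a) * 2) / D"
    unfolding p_def q_def by (simp_all add: add_divide_distrib)
  moreover have "(2 * a - M i j * b) * 2 + (2 * b - M j i * a) * M i j = a * D"
    "(2 * a - M i j * b) * M j i + (2 * b - M j i * a) * 2 = b * D"
    by (simp_all add: D_def algebra_simps)
  ultimately have "coroot_val M i (comb2 i j p q) = a" "coroot_val M j (comb2 i j p q) = b"
    using D unfolding coroot_val_comb2 assms(1,2) by simp_all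
  then have "coroot_val M i u = 0" "coroot_val M j u = 0"
    by (simp_all add: u_def coroot_val_diff a_def b_def)
  then have "refl_act M l u = u" if "l \<in> set x" for l
    using that assms(5) by (auto simp: refl_act_eq)
  then have fix_u: "word_act M x u = u"
    by (induction x) auto
  have fix_comb2: "word_act M x (comb2 i j p q) = comb2 i j p q"
    unfolding comb2_def word_act_lin fix_i fix_j ..
  have "word_act M x v = word_act M x (\<lambda>k. 1 * u k + 1 * comb2 i j p q k)"
    by (simp add: u_def)
  also have "\<dots> = (\<lambda>k. 1 * word_act M x u k + 1 * word_act M x (comb2 i j p q) k)"
    by (rule word_act_lin)
  also have "\<dots> = v"
    unfolding fix_u fix_comb2 by (simp add: u_def)
  finally show ?thesis .
qed

lemma relator_fixes_simple_root:
  assumes "is_EGCM M" "i \<noteq> j" "coxeter_m M i j = Some m"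
  shows "word_act M (concat (replicate m [i, j])) (simple_root i) = simple_root i"
proof (cases "M i j * M j i > 0")
  case True
  note m = coxeter_m_Some_product_pos[OF assms(2,3) True]
  define d where "d = 2 * cos (pi / real m)"
  have "word_act M (alt_word i j (2 * m)) (simple_root i) =
      comb2 i j (cheb d (Suc (2 * m))) (- M j i / d * cheb d (2 * m))"
    using dihedral_orbit[of i j M d "2 * m"] assms(2) is_EGCM_diag[OF assms(1)] m
    by (simp add: d_def)
  also have "\<dots> = simple_root i"
    using cheb_pi_div[of m] m by (simp add: d_def simple_root_comb2[of i j])
  finally show ?thesis
    by (simp add: alt_word_double)
next
  case False
  then have "M i j * M j i = 0"
    using is_EGCM_product_nonneg[OF assms(1,2)] by linarith
  then have "m = 2" "M i j = 0" "M j i = 0"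
    using coxeter_m_product_zero[OF assms(2)] assms(3) is_EGCM_zero_sym[OF assms(1), of i j]
    by auto
  then show ?thesis
    using refl_act_comb2_left[of i j M] refl_act_comb2_right[of i j M] assms(2)
      is_EGCM_diag[OF assms(1)]
    by (simp add: numeral_2_eq_2 simple_root_comb2[of i j])
qed

lemma relator_fixes_simple_root_right:
  assumes "is_EGCM M" "i \<noteq> j" "coxeter_m M i j = Some m"
  shows "word_act M (concat (replicate m [i, j])) (simple_root j) = simple_root j"
proof -
  let ?r = "concat (replicate m [j, i])"
  have "concat (replicate m [i, j]) = rev ?r"
    using rev_concat_replicate_pair[of m j i] by simp
  moreover have "word_act M ?r (simple_root j) = simple_root j"
    using relator_fixes_simple_root[OF assms(1), of j i m] assms(2,3) coxeter_m_sym[of M i j] by auto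
  ultimately have "word_act M (concat (replicate m [i, j])) (simple_root j) =
      word_act M (rev ?r) (word_act M ?r (simple_root j))"
    by simp
  also have "\<dots> = simple_root j"
    by (rule word_act_rev_cancel[of M, OF is_EGCM_diag_all[OF assms(1)]])
  finally show ?thesis .
qed

lemma coxeter_m_Some_product_ne_4:
  assumes "i \<noteq> j" "coxeter_m M i j = Some m"
  shows "M i j * M j i \<noteq> 4"
proof -
  have m: "m \<ge> 2" "M i j * M j i = 4 * (cos (pi / real m))^2"
    using coxeter_m_SomeD[OF assms] by auto
  then have "(cos (pi / real m))^2 < 1"
    using pi_div_nat_bounds[OF m(1)] by (simp add: abs_square_less_1)
  with m show ?thesis
    by simp
qed

lemma relator_act_id:
  assumes "is_EGCM M" "r \<in> coxeter_relators M"
  shows "word_act M r v = v"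
proof -
  have diag: "\<forall>i. M i i = 2"
    using is_EGCM_diag_all[OF assms(1)] .
  consider (square) i where "r = [i, i]"
    | (braid) i j m where "r = concat (replicate m [i, j])" "i \<noteq> j" "coxeter_m M i j = Some m"
    using assms(2) unfolding coxeter_relators_def by blast
  then show ?thesis
  proof cases
    case square
    then show ?thesis
      using refl_act_involution[of M i] diag by simp
  next
    case (braid i j m)
    have set_r: "set r \<subseteq> {i, j}"
      using braid(1) by auto
    show ?thesis
      using word_act_id_if_fixes_simple_roots[of M i j r, OF _ _ braid(2)
          coxeter_m_Some_product_ne_4[OF braid(2,3)] set_r] diag braid(1)
        relator_fixes_simple_root[OF assms(1) braid(2,3)]
        relator_fixes_simple_root_right[OF assms(1) braid(2,3)]
      by simp
  qed
qed

lemma cox_eq_word_act: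
  assumes "is_EGCM M" "cox_eq M xs ys"
  shows "word_act M xs = word_act M ys"
  using assms(2)
proof (induction rule: cox_eq.induct)
  case (cox_rel r xs ys)
  show ?case
    by (rule ext) (simp add: word_act_append relator_act_id[OF assms(1) cox_rel])
qed simp_all

lemma odd_adjacentE:
  assumes "odd_adjacent M s t"
  obtains m where "s \<noteq> t" "coxeter_m M s t = Some m" "odd m" "M s t * M t s > 0"
proof -
  obtain m where m: "s \<noteq> t" "coxeter_m M s t = Some m" "odd m"
    using assms unfolding odd_adjacent_def by blast
  then have m2: "m \<ge> 2" and prod: "M s t * M t s = 4 * (cos (pi / real m))^2"
    using coxeter_m_SomeD[OF m(1,2)] by auto
  with m(3) have "m \<ge> 3"
    by (cases "m = 2") auto
  then have "pi / real m < pi / 2"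
    by (intro divide_strict_left_mono) auto
  moreover have "pi / real m > 0"
    using m2 by simp
  ultimately have "cos (pi / real m) > 0"
    by (intro cos_gt_zero) auto
  with prod have "M s t * M t s > 0"
    by simp
  with m show ?thesis
    by (rule that)
qed

lemma oa_K_eq:
  assumes "odd_adjacent M s t" "coxeter_m M s t = Some m"
  shows "oa_K M t s = - M t s / (2 * cos (pi / real m))"
  using assms by (simp add: oa_K_def)

lemma odd_adjacent_moves_simple_root:
  assumes "is_EGCM M" "odd_adjacent M s t"
  shows "\<exists>u. word_act M u (simple_root s) = (\<lambda>l. oa_K M t s * simple_root t l)"
proof -
  obtain m where m: "s \<noteq> t" "coxeter_m M s t = Some m" "odd m" "M s t * M t s > 0"
    using odd_adjacentE[OF assms(2)] .
  note d = coxeter_m_Some_product_pos[OF m(1,2,4)]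
  define d where "d = 2 * cos (pi / real m)"
  have "word_act M (alt_word s t (m - 1)) (simple_root s) =
      comb2 s t (cheb d m) (- M t s / d * cheb d (m - 1))"
    using dihedral_orbit[of s t M d "m - 1"] m(1,3) d is_EGCM_diag[OF assms(1)]
    by (simp add: d_def)
  also have "\<dots> = comb2 s t 0 (- M t s / d)"
    using cheb_pi_div(1,2)[of m] d(1) unfolding d_def by simp
  also have "\<dots> = (\<lambda>l. oa_K M t s * simple_root t l)"
    using oa_K_eq[OF assms(2) m(2)] by (simp add: d_def comb2_def)
  finally show ?thesis by blast
qed

lemma oa_K_pos:
  assumes "is_EGCM M" "odd_adjacent M s t"
  shows "oa_K M t s > 0"
proof -
  obtain m where m: "s \<noteq> t" "coxeter_m M s t = Some m" "odd m" "M s t * M t s > 0"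
    using odd_adjacentE[OF assms(2)] .
  then have "M t s < 0"
    using is_EGCM_off_diag[OF assms(1), of t s] by (cases "M t s = 0") auto
  then show ?thesis
    using coxeter_m_Some_product_pos[OF m(1,2,4)] oa_K_eq[OF assms(2) m(2)] by (simp add: divide_neg_pos)
qed

lemma oa_K_eq_1_iff:
  assumes "is_EGCM M" "odd_adjacent M s t"
  shows "oa_K M t s = 1 \<longleftrightarrow> M s t = M t s"
proof -
  obtain m where m: "s \<noteq> t" "coxeter_m M s t = Some m" "odd m" "M s t * M t s > 0"
    using odd_adjacentE[OF assms(2)] .
  define d where "d = 2 * cos (pi / real m)"
  have d: "d > 0" "d * d = M s t * M t s"
    using coxeter_m_Some_product_pos[OF m(1,2,4)] by (simp_all add: d_def)
  have neg: "M t s < 0"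
    using m(4) is_EGCM_off_diag[OF assms(1), of t s] m(1) by (cases "M t s = 0") auto
  have "oa_K M t s = - M t s / d"
    using oa_K_eq[OF assms(2) m(2)] by (simp add: d_def)
  then have "oa_K M t s = 1 \<longleftrightarrow> - M t s = d"
    using d(1) by (auto simp: field_simps)
  also have "\<dots> \<longleftrightarrow> d\<^sup>2 = (- M t s)\<^sup>2"
    using d(1) neg by (subst power2_eq_iff_nonneg) auto
  also have "\<dots> \<longleftrightarrow> M s t * M t s = M t s * M t s"
    using d(2) by (simp add: power2_eq_square)
  also have "\<dots> \<longleftrightarrow> (M s t - M t s) * M t s = 0"
    by (simp add: algebra_simps)
  also have "\<dots> \<longleftrightarrow> M s t = M t s"
    using neg by simp
  finally show ?thesis .
qed

text \<open>Before the orbit of \<open>\<alpha>\<^sub>s\<close> under the dihedral group closes up, its coefficients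
  \<open>sin (j \<pi> / m) / sin (\<pi> / m)\<close>, or for \<open>m = \<infinity>\<close> the Chebyshev values at \<open>d \<ge> 2\<close>,
  are nonnegative.\<close>

lemma dihedral_parameter_nonneg:
  assumes "is_EGCM M" "s \<noteq> t" "M s t * M t s > 0"
    and short: "\<forall>m. coxeter_m M s t = Some m \<longrightarrow> k < m"
  obtains d where "d > 0" "d * d = M s t * M t s" "0 \<le> cheb d k" "0 \<le> cheb d (Suc k)"
proof (cases "coxeter_m M s t")
  case None
  define d where "d = sqrt (M s t * M t s)"
  have "d \<ge> 2"
    using coxeter_m_NoneD[OF assms(1,2) None] real_sqrt_le_mono[of 4] by (simp add: d_def)
  then show ?thesis
    using that[of d] assms(3) cheb_nonneg[of d] by (simp add: d_def)
next
  case (Some m)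
  with short have "Suc k \<le> m"
    by simp
  then show ?thesis
    using that[of "2 * cos (pi / real m)"] coxeter_m_Some_product_pos[OF assms(2) Some assms(3)]
      cheb_pi_div(5)[of m] by simp
qed

lemma dihedral_orbit_nonneg:
  assumes "is_EGCM M" "s \<noteq> t" and short: "\<forall>m. coxeter_m M s t = Some m \<longrightarrow> k < m"
  shows "\<exists>p q. p \<ge> 0 \<and> q \<ge> 0 \<and> word_act M (alt_word s t k) (simple_root s) = comb2 s t p q"
proof (cases "M s t * M t s = 0")
  case True
  then have "k < 2"
    using short coxeter_m_product_zero[OF assms(2)] by blast
  then consider "k = 0" | "k = 1" by linarith
  then show ?thesis
  proof cases
    case 1
    then show ?thesis
      by (intro exI[of _ 1] exI[of _ 0]) (simp add: simple_root_comb2[of s t])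
  next
    case 2
    then have "word_act M (alt_word s t k) (simple_root s) = comb2 s t 1 (- M t s)"
      using refl_act_comb2_right[of s t M 1 0] assms(2) is_EGCM_diag[OF assms(1)]
      by (simp add: simple_root_comb2[of s t])
    then show ?thesis
      using is_EGCM_off_diag[OF assms(1), of t s] assms(2)
      by (intro exI[of _ 1] exI[of _ "- M t s"]) simp
  qed
next
  case False
  then have "M s t * M t s > 0"
    using is_EGCM_product_nonneg[OF assms(1,2)] by linarith
  then obtain d where d: "d > 0" "d * d = M s t * M t s" "0 \<le> cheb d k" "0 \<le> cheb d (Suc k)"
    using dihedral_parameter_nonneg[OF assms(1,2) _ short] by blast
  have "- M t s / d \<ge> 0"
    using d(1) is_EGCM_off_diag[OF assms(1), of t s] assms(2) by (simp add: divide_nonpos_pos)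
  then have K: "0 \<le> - M t s / d * cheb d k" "0 \<le> - M t s / d * cheb d (Suc k)"
    using d(3,4) by (simp_all only: mult_nonneg_nonneg)
  have orbit: "word_act M (alt_word s t k) (simple_root s) =
    (if even k then comb2 s t (cheb d (Suc k)) (- M t s / d * cheb d k)
     else comb2 s t (cheb d k) (- M t s / d * cheb d (Suc k)))"
    by (rule dihedral_orbit[OF assms(2) is_EGCM_diag[OF assms(1)] is_EGCM_diag[OF assms(1)] d(1,2)])
  show ?thesis
  proof (cases "even k")
    case True
    with orbit d(4) K(1) show ?thesis
      by (metis (full_types))
  next
    case False
    with orbit d(3) K(2) show ?thesis
      by (metis (full_types))
  qed
qed

lemma alt_word_if_square_free:
  assumes "s \<noteq> t"
  shows "set u \<subseteq> {s, t} \<Longrightarrow> (\<forall>a x b. u \<noteq> a @ [x, x] @ b) \<Longrightarrow> u = [] \<or> last u = t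
    \<Longrightarrow> u = alt_word s t (length u)"
proof (induction u)
  case (Cons x u)
  have free: "\<forall>a y b. u \<noteq> a @ [y, y] @ b"
    using Cons.prems(2) by (metis append_Cons)
  show ?case
  proof (cases "u = []")
    case True
    then show ?thesis
      using Cons.prems(3) by simp
  next
    case False
    with Cons have u: "u = alt_word s t (length u)"
      using free by simp
    with False obtain k where k: "length u = Suc k"
      by (cases u) auto
    have "x \<noteq> (if even k then t else s)"
    proof
      assume "x = (if even k then t else s)"
      with u k have "x # u = [] @ [x, x] @ alt_word s t k"
        by simp
      with Cons.prems(2) show False
        by blast
    qed
    with Cons.prems(1) assms have "x = (if even (Suc k) then t else s)"
      by auto
    then show ?thesis
      using u k by simp
  qed
qed simp

lemma reduced_dihedral_word_eq_alt_word:
  assumes st: "s \<noteq> t" and u: "set u \<subseteq> {s, t}"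
    and reduced: "word_len_in M {s, t} u = length u"
    and ascent: "length u \<le> word_len_in M {s, t} (u @ [s])"
  shows "u = alt_word s t (length u)"
proof (rule alt_word_if_square_free[OF st u])
  show "\<forall>a x b. u \<noteq> a @ [x, x] @ b"
  proof (intro allI notI)
    fix a x b
    assume "u = a @ [x, x] @ b"
    then show False
      using word_len_in_le[of "a @ b" "{s, t}" M u] cox_eq_square[of M a x b] u reduced by simp
  qed
  show "u = [] \<or> last u = t"
  proof (rule ccontr)
    assume "\<not> (u = [] \<or> last u = t)"
    then have ne: "u \<noteq> []" and "last u \<noteq> t"
      by auto
    moreover have "last u \<in> {s, t}"
      using u last_in_set[OF ne] by blast
    ultimately have "u = butlast u @ [s]"
      using append_butlast_last_id[OF ne] by auto
    then obtain v where v: "u = v @ [s]" ..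
    then have "cox_eq M (u @ [s]) v"
      using cox_eq_square[of M v s "[]"] by simp
    moreover have "set v \<subseteq> {s, t}"
      using u v by simp
    ultimately have "length u \<le> length v"
      using word_len_in_le[of v "{s, t}" M "u @ [s]"] ascent by simp
    with v show False
      by simp
  qed
qed

text \<open>From length \<open>m\<^sub>s\<^sub>t\<close> on, the braid relation turns an alternating word followed by \<open>s\<close>
  into one containing \<open>s s\<close>.\<close>

lemma alt_word_ascent_imp_less:
  assumes st: "s \<noteq> t" and m: "coxeter_m M s t = Some m"
    and ascent: "k \<le> word_len_in M {s, t} (alt_word s t k @ [s])"
  shows "k < m"
proof (rule ccontr)
  assume "\<not> k < m"
  define j where "j = k - m"
  then have j: "k = j + m"
    using \<open>\<not> k < m\<close> by simp
  have "m \<ge> 2"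
    using coxeter_m_SomeD[OF st m] by simp
  then obtain m' where m': "m = Suc m'"
    using not0_implies_Suc by fastforce
  define P where "P = (if even m then alt_word s t j else alt_word t s j)"
  have "alt_word s t k @ [s] = P @ alt_word s t m @ [s]"
    unfolding j alt_word_add P_def by simp
  also have "cox_eq M \<dots> (P @ alt_word t s m @ [s])"
    by (rule cox_eq_context[OF cox_eq_braid[OF st m]])
  also have "P @ alt_word t s m @ [s] = (P @ alt_word s t m') @ [s, s] @ []"
    by (simp only: m' alt_word_Suc_snoc) simp
  also have "cox_eq M \<dots> ((P @ alt_word s t m') @ [])"
    by (rule cox_eq_square)
  finally have "word_len_in M {s, t} (alt_word s t k @ [s]) \<le> length ((P @ alt_word s t m') @ [])"
    by (rule word_len_in_le[rotated]) (auto simp: P_def dest: set_alt_word[THEN subsetD])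
  with ascent show False
    using j m' by (simp add: P_def split: if_split_asm)
qed

lemma reduced_dihedral_word_nonneg:
  assumes E: "is_EGCM M" and st: "s \<noteq> t" and u: "set u \<subseteq> {s, t}"
    and reduced: "word_len_in M {s, t} u = length u"
    and ascent: "length u \<le> word_len_in M {s, t} (u @ [s])"
  shows "\<exists>p q. p \<ge> 0 \<and> q \<ge> 0 \<and> word_act M u (simple_root s) = comb2 s t p q"
proof -
  have alt: "u = alt_word s t (length u)"
    by (rule reduced_dihedral_word_eq_alt_word[OF st u reduced ascent])
  with ascent have "\<forall>m. coxeter_m M s t = Some m \<longrightarrow> length u < m"
    using alt_word_ascent_imp_less[OF st] by metis
  from dihedral_orbit_nonneg[OF E st this] show ?thesis
    unfolding alt[symmetric] .
qed

section \<open>Positivity of roots\<close>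

definition nonneg_vec :: "('n \<Rightarrow> real) \<Rightarrow> bool" where
  "nonneg_vec v \<longleftrightarrow> (\<forall>k. 0 \<le> v k)"

lemma nonneg_vec_antisym: "nonneg_vec v \<Longrightarrow> nonneg_vec (\<lambda>k. - v k) \<Longrightarrow> v = (\<lambda>k. 0)"
  unfolding nonneg_vec_def by (rule ext) (meson antisym neg_0_le_iff_le)

lemma nonneg_vec_simple_root: "nonneg_vec (simple_root s)"
  by (simp add: nonneg_vec_def simple_root_def)

lemma word_len_le_parabolic:
  assumes "cox_eq M w (v @ u)" "set u \<subseteq> I"
  shows "word_len M w \<le> word_len M v + word_len_in M I u"
proof -
  have "word_len M w = word_len M (v @ u)"
    using word_len_cong[OF assms(1)] .
  also have "\<dots> \<le> word_len M v + word_len M u"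
    by (rule word_len_append_le)
  also have "\<dots> \<le> word_len M v + word_len_in M I u"
    using word_len_le_word_len_in[OF assms(2)] by simp
  finally show ?thesis .
qed

text \<open>The factorisation \<open>w = w\<^sup>I w\<^sub>I\<close> with \<open>w\<^sub>I\<close> in the parabolic subgroup \<open>W\<^sub>I\<close> and \<open>w\<^sup>I\<close> the
  minimal representative of \<open>w W\<^sub>I\<close>.\<close>

lemma parabolic_factorization:
  assumes "cox_eq M w (v\<^sub>0 @ u\<^sub>0)" "set u\<^sub>0 \<subseteq> I"
    and "word_len M v\<^sub>0 + word_len_in M I u\<^sub>0 = word_len M w"
  shows "\<exists>v u. set u \<subseteq> I \<and> cox_eq M w (v @ u) \<and> word_len M v + word_len_in M I u = word_len M w
    \<and> word_len M v \<le> word_len M v\<^sub>0 \<and> (\<forall>x\<in>I. word_len M v < word_len M (v @ [x]))"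
  using assms
proof (induction "word_len M v\<^sub>0" arbitrary: v\<^sub>0 u\<^sub>0 rule: less_induct)
  case less
  show ?case
  proof (cases "\<forall>x\<in>I. word_len M v\<^sub>0 < word_len M (v\<^sub>0 @ [x])")
    case True
    with less.prems show ?thesis
      by blast
  next
    case False
    then obtain x where x: "x \<in> I" "Suc (word_len M (v\<^sub>0 @ [x])) = word_len M v\<^sub>0"
      using word_len_snoc[of M v\<^sub>0] by force
    have "cox_eq M (v\<^sub>0 @ u\<^sub>0) ((v\<^sub>0 @ [x]) @ x # u\<^sub>0)"
      using cox_eq.cox_sym[OF cox_eq_square[of M v\<^sub>0 x u\<^sub>0]] by simp
    with less.prems(1) have w: "cox_eq M w ((v\<^sub>0 @ [x]) @ x # u\<^sub>0)"
      by (rule cox_eq.cox_trans)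
    moreover have u: "set (x # u\<^sub>0) \<subseteq> I"
      using less.prems(2) x(1) by simp
    moreover have "word_len M (v\<^sub>0 @ [x]) + word_len_in M I (x # u\<^sub>0) = word_len M w"
      using word_len_le_parabolic[OF w u] word_len_in_Cons[OF less.prems(2) x(1), of M]
        less.prems(3) x(2) by linarith
    ultimately show ?thesis
      using less.hyps[of "v\<^sub>0 @ [x]" "x # u\<^sub>0"] x(2) by fastforce
  qed
qed

lemma nonneg_vec_word_act_comb2:
  assumes "nonneg_vec (word_act M v (simple_root s))" "nonneg_vec (word_act M v (simple_root t))"
    and "p \<ge> 0" "q \<ge> 0"
  shows "nonneg_vec (word_act M v (comb2 s t p q))"
  using assms unfolding comb2_def word_act_lin nonneg_vec_def by simp

text \<open>The rank two step: the parabolic part \<open>u \<in> W\<^bsub>{s,t}\<^esub>\<close> of \<open>w\<close> is still ascending at \<open>s\<close>,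
  so \<open>u \<alpha>\<^sub>s\<close> is a nonnegative combination of \<open>\<alpha>\<^sub>s\<close> and \<open>\<alpha>\<^sub>t\<close>.\<close>

lemma ascent_nonneg_from_parabolic_factorization:
  assumes E: "is_EGCM M" and st: "s \<noteq> t"
    and u: "set u \<subseteq> {s, t}" and w: "cox_eq M w (v @ u)"
    and len_w: "word_len M v + word_len_in M {s, t} u = word_len M w"
    and ascent_w: "word_len M w < word_len M (w @ [s])"
    and v_nonneg: "nonneg_vec (word_act M v (simple_root s))" "nonneg_vec (word_act M v (simple_root t))"
  shows "nonneg_vec (word_act M w (simple_root s))"
proof -
  obtain u' where u': "set u' \<subseteq> {s, t}" "cox_eq M u u'" "length u' = word_len_in M {s, t} u"
    using word_len_in_witness[OF u] by blast
  have reduced: "word_len_in M {s, t} u' = length u'"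
    using word_len_in_cong[OF u'(2) u u'(1)] u'(3) by simp
  have w_vu': "cox_eq M w (v @ u')"
    using w cox_eq_append_left[OF u'(2)] by (rule cox_eq.cox_trans)
  have ascent: "length u' \<le> word_len_in M {s, t} (u' @ [s])"
  proof (rule ccontr)
    assume "\<not> ?thesis"
    have "cox_eq M (w @ [s]) (v @ u' @ [s])"
      using cox_eq_append_right[OF w_vu'] by simp
    moreover have "set (u' @ [s]) \<subseteq> {s, t}"
      using u'(1) by simp
    ultimately have "word_len M (w @ [s]) \<le> word_len M v + word_len_in M {s, t} (u' @ [s])"
      by (rule word_len_le_parabolic)
    with \<open>\<not> ?thesis\<close> show False
      using ascent_w len_w u'(3) by linarith
  qed
  obtain p q where pq: "p \<ge> 0" "q \<ge> 0" "word_act M u' (simple_root s) = comb2 s t p q"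
    using reduced_dihedral_word_nonneg[OF E st u'(1) reduced ascent] by blast
  have "word_act M w (simple_root s) = word_act M v (comb2 s t p q)"
    using cox_eq_word_act[OF E w_vu'] pq(3) by (simp add: word_act_append)
  moreover have "nonneg_vec (word_act M v (comb2 s t p q))"
    using v_nonneg pq(1,2) by (rule nonneg_vec_word_act_comb2)
  ultimately show ?thesis
    by simp
qed

text \<open>Factor \<open>w = v u\<close> as above with
  \<open>I = {s, t}\<close>, where \<open>t\<close> is the last letter of a reduced word for \<open>w\<close>; then \<open>v\<close> is shorter
  than \<open>w\<close> and ascending at \<open>s\<close> and \<open>t\<close>, so induction applies to it.\<close>

lemma ascent_imp_nonneg:
  assumes E: "is_EGCM M"
  shows "word_len M w < word_len M (w @ [s]) \<Longrightarrow> nonneg_vec (word_act M w (simple_root s))"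
proof (induction "word_len M w" arbitrary: w s rule: less_induct)
  case less
  show ?case
  proof (cases "word_len M w = 0")
    case True
    then show ?thesis
      using cox_eq_word_act[OF E cox_eq_Nil_if_word_len_0[OF True]] nonneg_vec_simple_root by simp
  next
    case False
    then obtain w' t where w': "cox_eq M w (w' @ [t])" "word_len M w' < word_len M (w' @ [t])"
      "word_len M (w' @ [t]) = word_len M w"
      using reduced_suffix by blast
    have st: "s \<noteq> t"
    proof
      assume "s = t"
      have "cox_eq M (w @ [s]) (w' @ [t, s] @ [])"
        using cox_eq_append_right[OF w'(1), of "[s]"] by simp
      also have "cox_eq M \<dots> (w' @ [])"
        using cox_eq_square[of M w' t "[]"] \<open>s = t\<close> by simp
      finally have "word_len M (w @ [s]) = word_len M w'"
        by (simp add: word_len_cong)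
      then show False
        using less.prems w'(2,3) by simp
    qed
    have "word_len_in M {s, t} [t] \<le> 1"
      using word_len_in_le[of "[t]" "{s, t}" M "[t]"] by (simp add: cox_eq.cox_refl)
    then have "word_len M w' + word_len_in M {s, t} [t] = word_len M w"
      using word_len_le_parabolic[OF w'(1), of "{s, t}"] w'(2,3) word_len_snoc[of M w' t] by simp
    then obtain v u where u: "set u \<subseteq> {s, t}" and w: "cox_eq M w (v @ u)"
      and len_w: "word_len M v + word_len_in M {s, t} u = word_len M w"
      and shorter: "word_len M v < word_len M w"
      and ascents: "\<forall>x\<in>{s, t}. word_len M v < word_len M (v @ [x])"
      using parabolic_factorization[OF w'(1), of "{s, t}"] w'(2,3) by fastforce
    have "nonneg_vec (word_act M v (simple_root x))" if "x \<in> {s, t}" for x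
      using less.hyps[OF shorter] ascents that by blast
    then show ?thesis
      using ascent_nonneg_from_parabolic_factorization[OF E st u w len_w less.prems] by simp
  qed
qed

lemma descent_imp_nonpos:
  assumes E: "is_EGCM M" and "word_len M (w @ [s]) < word_len M w"
  shows "nonneg_vec (\<lambda>k. - word_act M w (simple_root s) k)"
proof -
  have "word_len M ((w @ [s]) @ [s]) = word_len M w"
    using word_len_cong[OF cox_eq_square[of M w s "[]"]] by simp
  with assms have "nonneg_vec (word_act M (w @ [s]) (simple_root s))"
    using ascent_imp_nonneg[OF E, of "w @ [s]" s] by simp
  then show ?thesis
    by (simp add: word_act_append refl_act_simple_root[OF is_EGCM_diag[OF E]] word_act_neg)
qed

lemma root_nonneg_or_nonpos:
  assumes "is_EGCM M"
  shows "nonneg_vec (word_act M w (simple_root s)) \<or> nonneg_vec (\<lambda>k. - word_act M w (simple_root s) k)"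
  using word_len_snoc[of M w s] ascent_imp_nonneg[OF assms, of w s] descent_imp_nonpos[OF assms, of w s]
  by auto

lemma ascent_iff_nonneg:
  assumes E: "is_EGCM M"
  shows "word_len M w < word_len M (w @ [s]) \<longleftrightarrow> nonneg_vec (word_act M w (simple_root s))"
proof
  assume "nonneg_vec (word_act M w (simple_root s))"
  moreover have "word_act M w (simple_root s) \<noteq> (\<lambda>k. 0)"
    using word_act_root_nonzero[of M, OF is_EGCM_diag_all[OF E]] .
  ultimately show "word_len M w < word_len M (w @ [s])"
    using nonneg_vec_antisym descent_imp_nonpos[OF E, of w s] word_len_snoc[of M w s] by fastforce
qed (rule ascent_imp_nonneg[OF E])

lemma cox_eq_Nil_if_word_act_id:
  assumes E: "is_EGCM M" and id: "\<forall>v. word_act M w v = v"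
  shows "cox_eq M w []"
proof (rule ccontr)
  assume "\<not> cox_eq M w []"
  then have "0 < word_len M w"
    using cox_eq_Nil_if_word_len_0 by blast
  then obtain w' s where w': "cox_eq M w (w' @ [s])" "word_len M w' < word_len M (w' @ [s])"
    using reduced_suffix by blast
  have "word_act M (w' @ [s]) (simple_root s) = simple_root s"
    using cox_eq_word_act[OF E w'(1)] id by metis
  then have "(\<lambda>k. - word_act M w' (simple_root s) k) = simple_root s"
    by (simp add: word_act_append refl_act_simple_root[OF is_EGCM_diag[OF E]] word_act_neg)
  then have "word_act M w' (simple_root s) s = -1"
    by (metis minus_equation_iff simple_root_def)
  then show False
    using ascent_imp_nonneg[OF E w'(2)] unfolding nonneg_vec_def by (metis neg_0_le_iff_le not_one_le_zero neg_le_iff_le)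
qed

lemma word_act_range_finite:
  assumes E: "is_EGCM M" and F: "finite (coxeter_group M)"
  shows "finite (range (word_act M))"
proof -
  define rep where "rep c = (SOME xs. xs \<in> c)" for c :: "'a list set"
  have "range (word_act M) \<subseteq> (\<lambda>c. word_act M (rep c)) ` coxeter_group M"
  proof
    fix f
    assume "f \<in> range (word_act M)"
    then obtain xs where f: "f = word_act M xs"
      by blast
    let ?c = "{ys. cox_eq M xs ys}"
    have c: "?c \<in> coxeter_group M"
      by (auto simp: coxeter_group_def quotient_def Image_def)
    have "xs \<in> ?c"
      by (simp add: cox_eq.cox_refl)
    then have "rep ?c \<in> ?c"
      unfolding rep_def by (rule someI)
    then have "f = word_act M (rep ?c)"
      using f cox_eq_word_act[OF E] by simp
    with c show "f \<in> (\<lambda>c. word_act M (rep c)) ` coxeter_group M"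
      by blast
  qed
  then show ?thesis
    using finite_subset finite_imageI[OF F] by blast
qed

lemma pos_roots_finite:
  assumes "is_EGCM M" "finite (coxeter_group M)"
  shows "finite (pos_roots M)"
proof -
  have "roots M \<subseteq> (\<lambda>(f, i). f (simple_root i)) ` (range (word_act M) \<times> UNIV)"
    unfolding roots_def by auto
  moreover have "finite (range (word_act M) \<times> (UNIV :: 'a set))"
    using finite_cartesian_product[OF word_act_range_finite[OF assms] finite_UNIV] .
  ultimately have "finite (roots M)"
    by (rule finite_subset[OF _ finite_imageI])
  then show ?thesis
    unfolding pos_roots_def by simp
qed

lemma word_act_in_roots: "word_act M w (simple_root i) \<in> roots M"
  unfolding roots_def by blast

lemma pos_roots_iff: "v \<in> pos_roots M \<longleftrightarrow> v \<in> roots M \<and> nonneg_vec v"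
  by (simp add: pos_roots_def nonneg_vec_def)

lemma simple_root_in_pos_roots: "simple_root x \<in> pos_roots M"
  using word_act_in_roots[of M "[]" x] nonneg_vec_simple_root by (simp add: pos_roots_iff)

section \<open>The numbers game\<close>

text \<open>The population at a node after a play is read off by a root functional:
  firing \<open>\<gamma>\<^sub>i\<close> is dual to the reflection \<open>s\<^sub>i\<close>.\<close>

lemma root_functional_simple_root: "root_functional (simple_root j) lam = lam j"
proof -
  have "root_functional (simple_root j) lam = (\<Sum>k\<in>UNIV. if k = j then lam j else 0)"
    unfolding root_functional_def simple_root_def by (rule sum.cong) auto
  then show ?thesis
    by simp
qed

lemma root_functional_fire:
  "root_functional v (fire M i lam) = root_functional (refl_act M i v) lam"
proof -
  have "root_functional v (fire M i lam) = root_functional v lam - lam i * coroot_val M i v"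
    by (simp add: root_functional_def fire_def coroot_val_def algebra_simps sum_subtractf
        sum_distrib_left)
  also have "\<dots> = root_functional v lam - coroot_val M i v * root_functional (simple_root i) lam"
    by (simp add: root_functional_simple_root)
  also have "\<dots> = root_functional (refl_act M i v) lam"
    by (simp add: root_functional_def refl_act_eq algebra_simps sum_subtractf sum_distrib_left)
  finally show ?thesis .
qed

lemma root_functional_play:
  "root_functional v (play M lam ws) = root_functional (word_act M ws v) lam"
  by (induction ws arbitrary: lam) (simp_all add: play_def root_functional_fire)

lemma play_eq_root_functional: "play M lam ws j = root_functional (word_act M ws (simple_root j)) lam"
  using root_functional_play[of "simple_root j" M lam ws] by (simp add: root_functional_simple_root)

lemma root_functional_at_simple_root: "root_functional a (simple_root k) = a k"
proof -
  have "root_functional a (simple_root k) = (\<Sum>i\<in>UNIV. if i = k then a k else 0)"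
    unfolding root_functional_def simple_root_def by (rule sum.cong) auto
  then show ?thesis
    by simp
qed

lemma root_functional_eq_iff: "root_functional a = root_functional b \<longleftrightarrow> a = b"
proof
  assume eq: "root_functional a = root_functional b"
  show "a = b"
  proof
    fix k
    show "a k = b k"
      using fun_cong[OF eq, of "simple_root k"] by (simp only: root_functional_at_simple_root)
  qed
qed simp

lemma legal_play_fired_pos:
  "legal_play M lam seq \<Longrightarrow> k < length seq \<Longrightarrow> play M lam (take k seq) (seq ! k) > 0"
proof (induction seq arbitrary: lam k)
  case (Cons i seq)
  then show ?case
    by (cases k) (simp_all add: play_def)
qed simp

lemma root_functional_pos:
  assumes "strongly_dominant lam" "nonneg_vec v" "v \<noteq> (\<lambda>k. 0)"
  shows "root_functional v lam > 0"
proof -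
  obtain j where "v j \<noteq> 0"
    using assms(3) by auto
  with assms have "v j * lam j > 0"
    unfolding strongly_dominant_def nonneg_vec_def by (simp add: order_less_le)
  moreover have "\<forall>k\<in>UNIV. 0 \<le> v k * lam k"
    using assms(1,2) unfolding strongly_dominant_def nonneg_vec_def by (simp add: less_imp_le)
  ultimately show ?thesis
    unfolding root_functional_def by (intro sum_pos2[where i = j]) auto
qed

lemma root_functional_nonpos:
  assumes "strongly_dominant lam" "nonneg_vec (\<lambda>k. - v k)"
  shows "root_functional v lam \<le> 0"
  using assms unfolding root_functional_def strongly_dominant_def nonneg_vec_def
  by (simp add: sum_nonpos mult_nonpos_nonneg less_imp_le)

locale numbers_game =
  fixes M :: "'n::finite \<Rightarrow> 'n \<Rightarrow> real" and lam :: "'n \<Rightarrow> real" and seq :: "'n list"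
  assumes EGCM: "is_EGCM M" and dominant: "strongly_dominant lam"
    and game: "game_sequence M lam seq"
begin

lemma diag: "\<forall>i. M i i = 2"
  using is_EGCM_diag_all[OF EGCM] .

text \<open>\<open>fired_root k\<close> is \<open>\<beta>\<^sub>k\<^sub>+\<^sub>1\<close>: indices start at \<open>0\<close>.\<close>

definition fired_root :: "nat \<Rightarrow> ('n \<Rightarrow> real)" where
  "fired_root k = word_act M (take k seq) (simple_root (seq ! k))"

lemma game_root_Suc: "game_root M seq (Suc k) = fired_root k"
  by (simp add: game_root_def fired_root_def)

lemma fired_root_nonneg: "k < length seq \<Longrightarrow> nonneg_vec (fired_root k)"
  using legal_play_fired_pos[of M lam seq k] game root_nonneg_or_nonpos[OF EGCM]
    root_functional_nonpos[OF dominant]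
  unfolding game_sequence_def fired_root_def play_eq_root_functional by force

lemma fired_root_in_pos_roots: "k < length seq \<Longrightarrow> fired_root k \<in> pos_roots M"
  using fired_root_nonneg word_act_in_roots by (simp add: pos_roots_iff fired_root_def)

lemma word_len_take: "k \<le> length seq \<Longrightarrow> word_len M (take k seq) = k"
proof (induction k)
  case (Suc k)
  then have k: "k < length seq" by simp
  then have "word_len M (take k seq) < word_len M (take k seq @ [seq ! k])"
    using ascent_iff_nonneg[OF EGCM] fired_root_nonneg unfolding fired_root_def by blast
  then show ?case
    using word_len_snoc[of M "take k seq" "seq ! k"] Suc k by (simp add: take_Suc_conv_app_nth)
qed simp

lemma word_len_seq: "word_len M seq = length seq"
  using word_len_take[of "length seq"] by simp

text \<open>At the end of the game all populations are \<open>\<le> 0\<close>, so the word \<open>seq\<close> sends every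
  positive vector to a nonpositive one.\<close>

lemma seq_nonpos:
  assumes "nonneg_vec v"
  shows "nonneg_vec (\<lambda>l. - word_act M seq v l)"
proof -
  have "nonneg_vec (\<lambda>l. - word_act M seq (simple_root j) l)" for j
  proof -
    have "root_functional (word_act M seq (simple_root j)) lam \<le> 0"
      using game unfolding game_sequence_def play_eq_root_functional by simp
    then have "\<not> nonneg_vec (word_act M seq (simple_root j))"
      using root_functional_pos[OF dominant] word_act_root_nonzero[of M, OF diag] by force
    then show ?thesis
      using root_nonneg_or_nonpos[OF EGCM] by blast
  qed
  with assms show ?thesis
    unfolding nonneg_vec_def word_act_expand[of M seq v]
    by (simp add: sum_negf[symmetric] sum_nonneg mult_nonneg_nonpos)
qed

lemma rev_seq_nonpos:
  assumes "nonneg_vec (word_act M w (simple_root i))"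
  shows "nonneg_vec (\<lambda>l. - word_act M (rev seq @ w) (simple_root i) l)"
proof -
  let ?g = "word_act M w (simple_root i)"
  have "\<not> nonneg_vec (word_act M (rev seq @ w) (simple_root i))"
  proof
    assume "nonneg_vec (word_act M (rev seq @ w) (simple_root i))"
    then have "nonneg_vec (\<lambda>l. - word_act M seq (word_act M (rev seq) ?g) l)"
      unfolding word_act_append by (rule seq_nonpos)
    then have "nonneg_vec (\<lambda>l. - ?g l)"
      by (simp only: word_act_cancel_rev[of M, OF diag])
    with assms show False
      using nonneg_vec_antisym word_act_root_nonzero[of M, OF diag] by blast
  qed
  then show ?thesis
    using root_nonneg_or_nonpos[OF EGCM] by blast
qed

end

lemma word_len_snoc_cases:
  assumes "is_EGCM M"
  shows "nonneg_vec (word_act M w (simple_root s)) \<and> word_len M (w @ [s]) = Suc (word_len M w) \<or>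
    \<not> nonneg_vec (word_act M w (simple_root s)) \<and> Suc (word_len M (w @ [s])) = word_len M w"
  using word_len_snoc[of M w s] ascent_iff_nonneg[OF assms, of w s] by auto

lemma refl_act_nonneg_to_nonpos:
  assumes "nonneg_vec u" "nonneg_vec (\<lambda>l. - refl_act M i u l)"
  shows "u = (\<lambda>l. u i * simple_root i l)"
proof
  fix l
  show "u l = u i * simple_root i l"
  proof (cases "l = i")
    case False
    then have "refl_act M i u l = u l"
      by (simp add: refl_act_eq simple_root_def)
    with assms False show ?thesis
      unfolding nonneg_vec_def simple_root_def by (metis antisym mult_zero_right neg_0_le_iff_le)
  qed (simp add: simple_root_def)
qed

lemma coxeter_group_iff: "c \<in> coxeter_group M \<longleftrightarrow> (\<exists>xs. c = {ys. cox_eq M xs ys})"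
  by (auto simp: coxeter_group_def quotient_def Image_def)

lemma coxeter_length_class: "coxeter_length M {ys. cox_eq M xs ys} = word_len M xs"
proof -
  have "(\<lambda>k. k \<in> length ` {ys. cox_eq M xs ys}) = (\<lambda>k. \<exists>ys. cox_eq M xs ys \<and> length ys = k)"
    by auto
  then show ?thesis
    unfolding coxeter_length_def word_len_def by simp
qed

lemma cox_eq_class_eq: "cox_eq M xs ys \<Longrightarrow> {zs. cox_eq M xs zs} = {zs. cox_eq M ys zs}"
  by (auto intro: cox_eq.cox_trans cox_eq.cox_sym)

context numbers_game
begin

text \<open>Multiplying by \<open>seq\<close>, which turns every positive root negative, flips every ascent
  into a descent.\<close>

lemma word_len_add_word_len_rev_append_seq: "word_len M u + word_len M (rev u @ seq) = length seq"
proof (induction u rule: rev_induct)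
  case Nil
  then show ?case
    using word_len_seq by simp
next
  case (snoc s u)
  define x where "x = rev seq @ u"
  have len_x: "word_len M (rev u @ seq) = word_len M x"
    using word_len_rev[of M x] by (simp add: x_def)
  have len_xs: "word_len M (rev (u @ [s]) @ seq) = word_len M (x @ [s])"
    using word_len_rev[of M "x @ [s]"] by (simp add: x_def)
  have x_root: "word_act M x (simple_root s) = word_act M (rev seq @ u) (simple_root s)"
    by (simp add: x_def)
  have us_root: "word_act M (u @ [s]) (simple_root s) = (\<lambda>l. - word_act M u (simple_root s) l)"
    by (simp add: word_act_append refl_act_simple_root[OF is_EGCM_diag[OF EGCM]] word_act_neg)
  consider "nonneg_vec (word_act M u (simple_root s))" "word_len M (u @ [s]) = Suc (word_len M u)"
    | "\<not> nonneg_vec (word_act M u (simple_root s))" "Suc (word_len M (u @ [s])) = word_len M u"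
    using word_len_snoc_cases[OF EGCM] by blast
  then show ?case
  proof cases
    case 1
    then have "\<not> nonneg_vec (word_act M x (simple_root s))"
      using rev_seq_nonpos[of u s] nonneg_vec_antisym word_act_root_nonzero[of M, OF diag] x_root
      by metis
    then show ?thesis
      using word_len_snoc_cases[OF EGCM, of x s] 1 snoc len_x len_xs by auto
  next
    case 2
    then have "nonneg_vec (word_act M (u @ [s]) (simple_root s))"
      using root_nonneg_or_nonpos[OF EGCM, of u s] us_root by simp
    then have "nonneg_vec (word_act M x (simple_root s))"
      using rev_seq_nonpos[of "u @ [s]" s] us_root by (simp add: x_def word_act_append word_act_neg)
    then show ?thesis
      using word_len_snoc_cases[OF EGCM, of x s] 2 snoc len_x len_xs by auto
  qed
qed

lemma word_len_le_length_seq: "word_len M u \<le> length seq"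
  using word_len_add_word_len_rev_append_seq[of u] by simp

lemma cox_eq_seq_if_word_len_eq:
  assumes "word_len M u = length seq"
  shows "cox_eq M seq u"
proof -
  have "cox_eq M (rev u @ seq) []"
    using assms word_len_add_word_len_rev_append_seq[of u] cox_eq_Nil_if_word_len_0 by simp
  then show ?thesis
    using cox_eq_inverse[of M "rev u" seq] by simp
qed

lemma longest_element_eq: "longest_element M = {ys. cox_eq M seq ys}"
  unfolding longest_element_def
proof (rule the_equality)
  show "{ys. cox_eq M seq ys} \<in> coxeter_group M \<and>
    (\<forall>w' \<in> coxeter_group M. coxeter_length M w' \<le> coxeter_length M {ys. cox_eq M seq ys})"
    by (auto simp: coxeter_group_iff coxeter_length_class word_len_seq word_len_le_length_seq)
next
  fix w
  assume w: "w \<in> coxeter_group M \<and>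
    (\<forall>w' \<in> coxeter_group M. coxeter_length M w' \<le> coxeter_length M w)"
  then obtain u where u: "w = {ys. cox_eq M u ys}"
    by (auto simp: coxeter_group_iff)
  have "length seq \<le> word_len M u"
    using w u word_len_seq coxeter_length_class coxeter_group_iff by metis
  then have "cox_eq M seq u"
    using word_len_le_length_seq[of u] cox_eq_seq_if_word_len_eq by simp
  then show "w = {ys. cox_eq M seq ys}"
    using cox_eq_class_eq u by blast
qed

lemma coxeter_length_longest_element: "coxeter_length M (longest_element M) = length seq"
  by (simp add: longest_element_eq coxeter_length_class word_len_seq)

end

context numbers_game
begin

lemma fired_roots_not_proportional:
  assumes jk: "j < k" "k < length seq" and c: "c > 0"
  shows "fired_root k \<noteq> (\<lambda>l. c * fired_root j l)"
proof
  assume eq: "fired_root k = (\<lambda>l. c * fired_root j l)"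
  define v where "v = drop (Suc j) (take k seq)"
  have take_k: "take k seq = take (Suc j) seq @ v"
    using append_take_drop_id[of "Suc j" "take k seq"] jk by (simp add: v_def min_def)
  have take_Suc_j: "take (Suc j) seq = take j seq @ [seq ! j]"
    using jk by (simp add: take_Suc_conv_app_nth)
  let ?R = "rev (take (Suc j) seq)"
  have "word_act M v (simple_root (seq ! k)) = word_act M ?R (fired_root k)"
    unfolding fired_root_def take_k word_act_append word_act_rev_cancel[of M, OF diag] ..
  also have "\<dots> = (\<lambda>l. c * word_act M ?R (fired_root j) l)"
    unfolding eq word_act_scale ..
  also have "word_act M ?R (fired_root j) = (\<lambda>l. - simple_root (seq ! j) l)"
    unfolding fired_root_def take_Suc_j
    by (simp add: word_act_append word_act_rev_cancel[of M, OF diag]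
        refl_act_simple_root[OF is_EGCM_diag[OF EGCM]])
  finally have "\<not> nonneg_vec (word_act M v (simple_root (seq ! k)))"
    using c unfolding nonneg_vec_def by (auto simp: simple_root_def intro!: exI[of _ "seq ! j"])
  then have descent: "Suc (word_len M (v @ [seq ! k])) = word_len M v"
    using word_len_snoc_cases[OF EGCM] by blast
  have "take (Suc k) seq = take (Suc j) seq @ v @ [seq ! k]"
    using jk take_k by (simp add: take_Suc_conv_app_nth)
  then have "word_len M (take (Suc k) seq) \<le> word_len M (take (Suc j) seq) + word_len M (v @ [seq ! k])"
    using word_len_append_le[of M "take (Suc j) seq" "v @ [seq ! k]"] by simp
  moreover have "length v = k - Suc j"
    using jk by (simp add: v_def)
  ultimately show False
    using word_len_take[of "Suc k"] word_len_take[of "Suc j"] word_len_le_length[of M v] jk descent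
    by simp
qed

lemma fired_roots_proportional_imp_eq:
  assumes "j < length seq" "k < length seq" "K > 0" and eq: "fired_root k = (\<lambda>l. K * fired_root j l)"
  shows "j = k"
proof (rule linorder_cases[of j k])
  assume "j < k"
  with assms show ?thesis
    using fired_roots_not_proportional by blast
next
  assume "k < j"
  moreover have "fired_root j = (\<lambda>l. (1 / K) * fired_root k l)"
    using eq assms(3) by simp
  ultimately show ?thesis
    using fired_roots_not_proportional[of k j "1 / K"] assms by simp
qed

lemma fired_root_inj: "inj_on fired_root {..<length seq}"
  by (rule inj_onI) (use fired_roots_proportional_imp_eq[where K = 1] in simp)

text \<open>Undoing the game step by step, a positive root first becomes negative at a fired node,
  where it must be a multiple of the simple root.\<close>

lemma nonneg_root_on_fired_ray:
  assumes nonneg: "nonneg_vec (word_act M w (simple_root i))"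
  obtains k c where "k < length seq" "c > 0"
    "word_act M w (simple_root i) = (\<lambda>l. c * fired_root k l)"
    "word_act M (rev (take k seq) @ w) (simple_root i) = (\<lambda>l. c * simple_root (seq ! k) l)"
proof -
  define g where "g k = word_act M (rev (take k seq) @ w) (simple_root i)" for k
  have "\<not> nonneg_vec (g (length seq))"
    using rev_seq_nonpos[OF nonneg] nonneg_vec_antisym word_act_root_nonzero[of M, OF diag]
    unfolding g_def by (metis take_all order_refl)
  moreover have "nonneg_vec (g 0)"
    using nonneg by (simp add: g_def)
  ultimately obtain k where k: "k < length seq" "nonneg_vec (g k)" "\<not> nonneg_vec (g (Suc k))"
    using ex_least_nat_less[of "\<lambda>k. \<not> nonneg_vec (g k)" "length seq"] by blast
  have g_Suc: "g (Suc k) = refl_act M (seq ! k) (g k)"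
    using k(1) by (simp add: g_def take_Suc_conv_app_nth)
  define c where "c = g k (seq ! k)"
  have g_k: "g k = (\<lambda>l. c * simple_root (seq ! k) l)"
    unfolding c_def using refl_act_nonneg_to_nonpos[OF k(2)] k(3) g_Suc
      root_nonneg_or_nonpos[OF EGCM, of "rev (take (Suc k) seq) @ w" i] by (simp add: g_def)
  have "c \<ge> 0"
    using k(2) by (simp add: c_def nonneg_vec_def)
  moreover have "c \<noteq> 0"
    using g_k word_act_root_nonzero[of M, OF diag] unfolding g_def by force
  ultimately have c_pos: "c > 0"
    by simp
  have "word_act M w (simple_root i) = word_act M (take k seq) (g k)"
    unfolding g_def word_act_append word_act_cancel_rev[of M, OF diag] ..
  then have "word_act M w (simple_root i) = (\<lambda>l. c * fired_root k l)"
    unfolding g_k word_act_scale fired_root_def .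
  from that[OF k(1) c_pos this g_k[unfolded g_def]] show ?thesis .
qed

end

section \<open>OA-paths\<close>

lemma odd_adjacent_sym: "odd_adjacent M i j \<Longrightarrow> odd_adjacent M j i"
  by (auto simp: odd_adjacent_def coxeter_m_sym)

lemma oa_path_snoc:
  assumes "ps \<noteq> []"
  shows "oa_path M (ps @ [z]) \<longleftrightarrow> oa_path M ps \<and> odd_adjacent M (last ps) z"
proof -
  obtain n where n: "length ps = Suc n"
    using assms by (cases ps) auto
  have "oa_path M (ps @ [z]) \<longleftrightarrow>
      odd_adjacent M (ps ! n) z \<and> (\<forall>k < n. odd_adjacent M (ps ! k) (ps ! Suc k))"
    unfolding oa_path_def using n by (simp add: All_less_Suc nth_append)
  then show ?thesis
    unfolding oa_path_def using assms n by (auto simp: last_conv_nth)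
qed

lemma oa_weight_snoc:
  assumes "ps \<noteq> []"
  shows "oa_weight M (ps @ [z]) = oa_weight M ps * oa_K M z (last ps)"
proof -
  obtain n where n: "length ps = Suc n"
    using assms by (cases ps) auto
  have "oa_weight M (ps @ [z]) = (\<Prod>k < n. oa_K M (ps ! Suc k) (ps ! k)) * oa_K M z (ps ! n)"
    unfolding oa_weight_def using n by (simp add: nth_append)
  then show ?thesis
    unfolding oa_weight_def using assms n by (simp add: last_conv_nth)
qed

lemma oa_path_induct [consumes 1, case_names single snoc]:
  assumes "oa_path M ps"
    and single: "\<And>x. P [x]"
    and snoc: "\<And>ps z. oa_path M ps \<Longrightarrow> odd_adjacent M (last ps) z \<Longrightarrow> P ps \<Longrightarrow> P (ps @ [z])"
  shows "P ps"
  using assms(1)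
proof (induction ps rule: rev_induct)
  case (snoc z ps)
  show ?case
  proof (cases "ps = []")
    case False
    then have path: "oa_path M ps" and odd: "odd_adjacent M (last ps) z"
      using snoc.prems oa_path_snoc[OF False] by simp_all
    show ?thesis
      by (rule assms(3)[OF path odd snoc.IH[OF path]])
  qed (simp add: single)
qed (simp add: oa_path_def)

lemma oa_path_Nil: "oa_path M ps \<Longrightarrow> ps \<noteq> []"
  by (simp add: oa_path_def)

lemma oa_weight_singleton: "oa_weight M [x] = 1"
  by (simp add: oa_weight_def)

lemma oa_weight_pos:
  assumes "is_EGCM M" "oa_path M ps"
  shows "oa_weight M ps > 0"
  using assms(2)
proof (induction rule: oa_path_induct)
  case (snoc ps z)
  then show ?case
    using oa_weight_snoc[OF oa_path_Nil[OF snoc.hyps(1)]] oa_K_pos[OF assms(1) snoc.hyps(2)] by simp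
qed (simp add: oa_weight_singleton)

lemma oa_path_moves_simple_root:
  assumes "is_EGCM M" "oa_path M ps"
  shows "\<exists>u. word_act M u (simple_root (hd ps)) = (\<lambda>l. oa_weight M ps * simple_root (last ps) l)"
  using assms(2)
proof (induction rule: oa_path_induct)
  case (single x)
  show ?case
    by (rule exI[of _ "[]"]) (simp add: oa_weight_singleton)
next
  case (snoc ps z)
  obtain u where u: "word_act M u (simple_root (hd ps)) = (\<lambda>l. oa_weight M ps * simple_root (last ps) l)"
    using snoc.IH by (elim exE)
  obtain u' where u': "word_act M u' (simple_root (last ps)) = (\<lambda>l. oa_K M z (last ps) * simple_root z l)"
    using odd_adjacent_moves_simple_root[OF assms(1) snoc.hyps(2)] by (elim exE)
  have "word_act M (u' @ u) (simple_root (hd (ps @ [z]))) =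
      (\<lambda>l. oa_weight M (ps @ [z]) * simple_root (last (ps @ [z])) l)"
    using oa_path_Nil[OF snoc.hyps(1)]
    by (simp add: word_act_append u word_act_scale u' oa_weight_snoc mult.assoc)
  then show ?case
    by (rule exI[of _ "u' @ u"])
qed

lemma oa_weight_eq_1_if_symmetric:
  assumes "is_EGCM M" "\<forall>i j. \<not> odd_asymmetry M i j" "oa_path M ps"
  shows "oa_weight M ps = 1"
  unfolding oa_weight_def
proof (rule prod.neutral, intro ballI)
  fix k
  assume "k \<in> {..<length ps - 1}"
  then have odd: "odd_adjacent M (ps ! k) (ps ! (k + 1))"
    using assms(3) unfolding oa_path_def by simp
  with assms(2) have "M (ps ! k) (ps ! (k + 1)) = M (ps ! (k + 1)) (ps ! k)"
    unfolding odd_asymmetry_def by blast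
  then show "oa_K M (ps ! (k + 1)) (ps ! k) = 1"
    using oa_K_eq_1_iff[OF assms(1) odd] by simp
qed

lemma oa_component_self: "x \<in> oa_component M x"
  unfolding oa_component_def oa_path_def by (intro CollectI exI[of _ "[x]"]) simp

lemma oa_component_closed:
  assumes "a \<in> oa_component M x" "odd_adjacent M a b"
  shows "b \<in> oa_component M x"
proof -
  obtain ps where ps: "oa_path M ps" "hd ps = x" "last ps = a"
    using assms(1) unfolding oa_component_def by blast
  then have ne: "ps \<noteq> []"
    by (simp add: oa_path_def)
  have "oa_path M (ps @ [b])"
    using oa_path_snoc[OF ne] ps(1,3) assms(2) by simp
  moreover have "hd (ps @ [b]) = x"
    using ne ps(2) by simp
  ultimately show ?thesis
    unfolding oa_component_def by force
qed

lemma even_count_relator: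
  assumes "r \<in> coxeter_relators M" "\<forall>a b. a \<in> C \<longrightarrow> odd_adjacent M a b \<longrightarrow> b \<in> C"
  shows "even (length (filter (\<lambda>x. x \<in> C) r))"
proof -
  have count_replicate: "length (filter P (concat (replicate k xs))) = k * length (filter P xs)"
    for P and k :: nat and xs :: "'a list"
    by (induction k) auto
  consider (square) i where "r = [i, i]"
    | (braid) i j k where "r = concat (replicate k [i, j])" "i \<noteq> j" "coxeter_m M i j = Some k"
    using assms(1) unfolding coxeter_relators_def by blast
  then show ?thesis
  proof cases
    case (braid i j k)
    show ?thesis
    proof (cases "even k")
      case False
      with braid have "odd_adjacent M i j"
        by (auto simp: odd_adjacent_def)
      then have "i \<in> C \<longleftrightarrow> j \<in> C"
        using assms(2) odd_adjacent_sym by metis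
      then show ?thesis
        unfolding braid(1) count_replicate by (cases "i \<in> C") auto
    next
      case True
      then show ?thesis
        unfolding braid(1) count_replicate by simp
    qed
  qed simp
qed

lemma cox_eq_even_count:
  assumes "cox_eq M xs ys" "\<forall>a b. a \<in> C \<longrightarrow> odd_adjacent M a b \<longrightarrow> b \<in> C"
  shows "even (length (filter (\<lambda>x. x \<in> C) xs)) = even (length (filter (\<lambda>x. x \<in> C) ys))"
  using assms(1)
proof (induction rule: cox_eq.induct)
  case (cox_rel r xs ys)
  then show ?case
    using even_count_relator[OF cox_rel assms(2)] by simp
qed simp_all

lemma word_act_id_if_transvection:
  assumes E: "is_EGCM M" and F: "finite (coxeter_group M)"
    and trans: "\<forall>v. \<exists>t. word_act M z v = (\<lambda>l. v l + t * simple_root x l)"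
    and fix_x: "word_act M z (simple_root x) = simple_root x"
  shows "word_act M z v = v"
proof -
  obtain T where T: "\<And>v. word_act M z v = (\<lambda>l. v l + T v * simple_root x l)"
    using trans by metis
  have pow: "word_act M (concat (replicate n z)) v = (\<lambda>l. v l + real n * T v * simple_root x l)" for n
  proof (induction n)
    case (Suc n)
    have "word_act M (concat (replicate (Suc n) z)) v =
        word_act M z (\<lambda>l. 1 * v l + (real n * T v) * simple_root x l)"
      using Suc by (simp add: word_act_append)
    also have "\<dots> = (\<lambda>l. v l + real (Suc n) * T v * simple_root x l)"
      unfolding word_act_lin fix_x T[of v] by (simp add: algebra_simps)
    finally show ?case .
  qed simp
  have "finite (range (\<lambda>n. word_act M (concat (replicate n z))))"
    using word_act_range_finite[OF E F] by (rule finite_subset[rotated]) auto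
  then have "\<not> inj (\<lambda>n. word_act M (concat (replicate n z)))"
    using finite_imageD infinite_UNIV_nat by blast
  then obtain a b where "a \<noteq> b"
    and ab: "word_act M (concat (replicate a z)) = word_act M (concat (replicate b z))"
    unfolding inj_def by blast
  have "word_act M (concat (replicate a z)) v x = word_act M (concat (replicate b z)) v x"
    by (simp only: ab)
  then have "real a * T v = real b * T v"
    unfolding pow by (simp add: simple_root_def)
  with \<open>a \<noteq> b\<close> have "T v = 0"
    by simp
  then show ?thesis
    using T[of v] by simp
qed

text \<open>If \<open>w \<alpha>\<^sub>y = K \<alpha>\<^sub>x\<close>, then \<open>w s\<^sub>y w\<^sup>-\<^sup>1\<close> and \<open>s\<^sub>x\<close> are reflections along the same line, so
  their product is a transvection fixing \<open>\<alpha>\<^sub>x\<close>.\<close>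

lemma conjugate_reflection_transvection:
  assumes diag: "\<forall>i. M i i = 2"
    and w: "word_act M w (simple_root y) = (\<lambda>l. K * simple_root x l)" and K: "K \<noteq> 0"
  defines "z \<equiv> w @ [y] @ rev w @ [x]"
  shows "word_act M z (simple_root x) = simple_root x"
    and "\<exists>t. word_act M z v = (\<lambda>l. v l + t * simple_root x l)"
proof -
  have z: "word_act M z v = word_act M w (refl_act M y (word_act M (rev w) (refl_act M x v)))" for v
    by (simp add: z_def word_act_append)
  have "(\<lambda>l. K * word_act M (rev w) (simple_root x) l) = simple_root y"
    using word_act_rev_cancel[of M, OF diag, of w "simple_root y"] w by (simp add: word_act_scale)
  then have w_inv: "word_act M (rev w) (simple_root x) = (\<lambda>l. (1 / K) * simple_root y l)"
    using K by (auto simp: fun_eq_iff field_simps)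
  have "word_act M z (simple_root x) = word_act M w (refl_act M y (\<lambda>l. (- 1 / K) * simple_root y l))"
    unfolding z refl_act_simple_root[OF diag[rule_format]] word_act_neg w_inv by simp
  also have "\<dots> = word_act M w (\<lambda>l. (1 / K) * simple_root y l)"
    using word_act_scale[of M "[y]" "- 1 / K" "simple_root y"]
    by (simp add: refl_act_simple_root[OF diag[rule_format]])
  also have "\<dots> = simple_root x"
    unfolding word_act_scale w using K by simp
  finally show "word_act M z (simple_root x) = simple_root x" .
  define v' where "v' = word_act M (rev w) (refl_act M x v)"
  have "word_act M z v = word_act M w (refl_act M y v')"
    by (simp add: z v'_def)
  also have "\<dots> = word_act M w (\<lambda>l. 1 * v' l + (- coroot_val M y v') * simple_root y l)"
    by (simp add: refl_act_eq)
  also have "\<dots> = (\<lambda>l. v l + (- coroot_val M x v - coroot_val M y v' * K) * simple_root x l)"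
    unfolding word_act_lin w v'_def word_act_cancel_rev[of M, OF diag] refl_act_eq
    by (simp add: algebra_simps)
  finally show "\<exists>t. word_act M z v = (\<lambda>l. v l + t * simple_root x l)"
    by (rule exI)
qed

text \<open>Being a transvection of finite order, \<open>w s\<^sub>y w\<^sup>-\<^sup>1 s\<^sub>x\<close> is a relation of \<open>W\<close>. A relation has an
  even number of letters in the OA-component of \<open>x\<close>, which forces \<open>y\<close> into that component.\<close>

lemma conjugate_simple_root_in_oa_component:
  assumes E: "is_EGCM M" and F: "finite (coxeter_group M)"
    and w: "word_act M w (simple_root y) = (\<lambda>l. K * simple_root x l)" and K: "K > 0"
  shows "y \<in> oa_component M x"
proof -
  define z where "z = w @ [y] @ rev w @ [x]"
  note transvection = conjugate_reflection_transvection[OF is_EGCM_diag_all[OF E] w, folded z_def]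
  have "\<forall>v. word_act M z v = v"
    using word_act_id_if_transvection[OF E F _ transvection(1)] transvection(2) K by simp
  then have relation: "cox_eq M z []"
    by (rule cox_eq_Nil_if_word_act_id[OF E])
  have "\<forall>a b. a \<in> oa_component M x \<longrightarrow> odd_adjacent M a b \<longrightarrow> b \<in> oa_component M x"
  proof (intro allI impI)
    fix a b
    assume "a \<in> oa_component M x" "odd_adjacent M a b"
    then show "b \<in> oa_component M x"
      by (rule oa_component_closed)
  qed
  then have "even (length (filter (\<lambda>a. a \<in> oa_component M x) z))"
    using cox_eq_even_count[OF relation] by simp
  moreover have "length (filter (\<lambda>a. a \<in> oa_component M x) z) =
      2 * length (filter (\<lambda>a. a \<in> oa_component M x) w) + (if y \<in> oa_component M x then 1 else 0) + 1"
    using oa_component_self[of x M] by (simp add: z_def rev_filter[symmetric])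
  ultimately show ?thesis
    by (cases "y \<in> oa_component M x") auto
qed

definition ray_roots :: "('n::finite \<Rightarrow> 'n \<Rightarrow> real) \<Rightarrow> 'n \<Rightarrow> ('n \<Rightarrow> real) set" where
  "ray_roots M x = {v. \<exists>K::real. v = (\<lambda>k. K * simple_root x k)} \<inter> pos_roots M"

lemma f_at_eq_card_ray_roots: "f_at M x = card (ray_roots M x)"
  by (simp add: f_at_def ray_roots_def)

lemma scaled_simple_root_eq_iff: "(\<lambda>l. K * simple_root x l) = simple_root x \<longleftrightarrow> K = 1"
proof
  assume "(\<lambda>l. K * simple_root x l) = simple_root x"
  from fun_cong[OF this, of x] show "K = 1"
    by (simp add: simple_root_def)
qed simp

lemma scaled_simple_root_in_ray_roots:
  assumes "word_act M u (simple_root y) = (\<lambda>l. K * simple_root x l)" "K \<ge> 0"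
  shows "(\<lambda>l. K * simple_root x l) \<in> ray_roots M x"
proof -
  have "(\<lambda>l. K * simple_root x l) \<in> pos_roots M"
    using word_act_in_roots[of M u y] assms
    by (simp add: pos_roots_iff nonneg_vec_def simple_root_def)
  then show ?thesis
    unfolding ray_roots_def by blast
qed

lemma simple_root_in_ray_roots: "simple_root x \<in> ray_roots M x"
  using scaled_simple_root_in_ray_roots[of M "[]" x 1 x] by simp

lemma ray_root_eq_simple_root:
  assumes "f_at M x = 1" "v \<in> ray_roots M x"
  shows "v = simple_root x"
proof -
  obtain a where "ray_roots M x = {a}"
    using assms(1) unfolding f_at_eq_card_ray_roots by (rule card_1_singletonE)
  then show ?thesis
    using assms(2) simple_root_in_ray_roots[of x M] by simp
qed

lemma ray_rootE:
  assumes "is_EGCM M" "v \<in> ray_roots M x"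
  obtains w y K where "K > 0" "v = (\<lambda>l. K * simple_root x l)" "v = word_act M w (simple_root y)"
proof -
  obtain K where K: "v = (\<lambda>l. K * simple_root x l)" and "v \<in> pos_roots M"
    using assms(2) unfolding ray_roots_def by blast
  then obtain w y where w: "v = word_act M w (simple_root y)" and "nonneg_vec v"
    unfolding pos_roots_iff roots_def by blast
  then have "K \<ge> 0"
    using K unfolding nonneg_vec_def by (metis mult_1_right simple_root_def)
  moreover have "K \<noteq> 0"
    using w K word_act_root_nonzero[of M, OF is_EGCM_diag_all[OF assms(1)]] by force
  ultimately have "K > 0"
    by simp
  from that[OF this K w] show ?thesis .
qed

text \<open>If \<open>h \<alpha>\<^sub>x = K \<alpha>\<^sub>x\<close> then all \<open>K\<^sup>n \<alpha>\<^sub>x\<close> are roots; as there are finitely many, \<open>K = 1\<close>.\<close>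

lemma eigenvalue_simple_root_eq_1:
  assumes E: "is_EGCM M" and F: "finite (coxeter_group M)"
    and h: "word_act M h (simple_root x) = (\<lambda>l. K * simple_root x l)" and K: "K > 0"
  shows "K = 1"
proof (rule ccontr)
  assume "K \<noteq> 1"
  have pow: "word_act M (concat (replicate n h)) (simple_root x) = (\<lambda>l. K ^ n * simple_root x l)" for n
  proof (induction n)
    case (Suc n)
    have "word_act M (concat (replicate (Suc n) h)) (simple_root x) =
        word_act M h (\<lambda>l. K ^ n * simple_root x l)"
      using Suc by (simp add: word_act_append)
    also have "\<dots> = (\<lambda>l. K ^ n * (K * simple_root x l))"
      unfolding word_act_scale h ..
    finally show ?case
      by (simp add: mult_ac)
  qed simp
  have "range (\<lambda>n. (\<lambda>l. K ^ n * simple_root x l)) \<subseteq> ray_roots M x"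
    using scaled_simple_root_in_ray_roots[OF pow] K by auto
  then have "finite (range (\<lambda>n. (\<lambda>l. K ^ n * simple_root x l)))"
    by (rule finite_subset) (use pos_roots_finite[OF E F] in \<open>simp add: ray_roots_def\<close>)
  then have "\<not> inj (\<lambda>n. (\<lambda>l. K ^ n * simple_root x l))"
    using finite_imageD infinite_UNIV_nat by blast
  then obtain a b :: nat where "a \<noteq> b" "(\<lambda>l. K ^ a * simple_root x l) = (\<lambda>l. K ^ b * simple_root x l)"
    unfolding inj_def by blast
  then have "a \<noteq> b" "K ^ a = K ^ b"
    by (metis mult_1_right simple_root_def)+
  moreover have "K ^ a = K ^ b \<Longrightarrow> a = b"
  proof (cases "K > 1")
    case False
    with K \<open>K \<noteq> 1\<close> have "1 / K > 1"
      by (simp add: field_simps)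
    then show "K ^ a = K ^ b \<Longrightarrow> a = b"
      using power_inject_exp by (metis power_one_over)
  qed (use power_inject_exp in blast)
  ultimately show False
    by blast
qed

lemma no_odd_asymmetry_if_f_at_1:
  assumes E: "is_EGCM M" and f: "\<forall>x. f_at M x = 1"
  shows "\<not> odd_asymmetry M i j"
proof
  assume "odd_asymmetry M i j"
  then have odd: "odd_adjacent M i j" and asym: "M i j \<noteq> M j i"
    unfolding odd_asymmetry_def by auto
  obtain u where "word_act M u (simple_root i) = (\<lambda>l. oa_K M j i * simple_root j l)"
    using odd_adjacent_moves_simple_root[OF E odd] by (elim exE)
  then have "(\<lambda>l. oa_K M j i * simple_root j l) \<in> ray_roots M j"
    using oa_K_pos[OF E odd] by (intro scaled_simple_root_in_ray_roots) auto
  then have "oa_K M j i = 1"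
    using ray_root_eq_simple_root f scaled_simple_root_eq_iff by metis
  with asym show False
    using oa_K_eq_1_iff[OF E odd] by simp
qed

lemma unital_OA_cyclic_if_f_at_1:
  assumes E: "is_EGCM M" and f: "\<forall>x. f_at M x = 1"
  shows "unital_OA_cyclic M S"
  unfolding unital_OA_cyclic_def
proof (intro allI impI)
  fix ps
  assume "oa_cycle M ps \<and> set ps \<subseteq> S"
  then have path: "oa_path M ps" and cycle: "last ps = hd ps"
    unfolding oa_cycle_def by auto
  obtain u where "word_act M u (simple_root (hd ps)) = (\<lambda>l. oa_weight M ps * simple_root (hd ps) l)"
    using oa_path_moves_simple_root[OF E path] cycle by (elim exE) simp
  then have "(\<lambda>l. oa_weight M ps * simple_root (hd ps) l) \<in> ray_roots M (hd ps)"
    using oa_weight_pos[OF E path] by (intro scaled_simple_root_in_ray_roots) auto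
  then show "oa_weight M ps = 1"
    using ray_root_eq_simple_root f scaled_simple_root_eq_iff by metis
qed

lemma f_at_1_if_no_odd_asymmetry:
  assumes E: "is_EGCM M" and F: "finite (coxeter_group M)" and sym: "\<forall>i j. \<not> odd_asymmetry M i j"
  shows "f_at M x = 1"
proof -
  have "ray_roots M x = {simple_root x}"
  proof (intro equalityI subsetI)
    fix v
    assume "v \<in> ray_roots M x"
    then obtain w y K where K: "K > 0" "v = (\<lambda>l. K * simple_root x l)"
      and w: "v = word_act M w (simple_root y)"
      using ray_rootE[OF E] by blast
    then have "y \<in> oa_component M x"
      using conjugate_simple_root_in_oa_component[OF E F, of w y K x] by simp
    then obtain ps where ps: "oa_path M ps" "hd ps = x" "last ps = y"
      unfolding oa_component_def by blast
    obtain u where "word_act M u (simple_root x) = (\<lambda>l. oa_weight M ps * simple_root y l)"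
      using oa_path_moves_simple_root[OF E ps(1)] ps(2,3) by (elim exE) simp
    then have "word_act M u (simple_root x) = simple_root y"
      using oa_weight_eq_1_if_symmetric[OF E sym ps(1)] by simp
    then have "word_act M (w @ u) (simple_root x) = (\<lambda>l. K * simple_root x l)"
      using w K(2) by (simp add: word_act_append)
    then have "K = 1"
      by (rule eigenvalue_simple_root_eq_1[OF E F _ K(1)])
    then show "v \<in> {simple_root x}"
      using K(2) by simp
  qed (simp add: simple_root_in_ray_roots)
  then show ?thesis
    by (simp add: f_at_eq_card_ray_roots)
qed

context numbers_game
begin

lemma f_at_1_if_pos_roots_subset_fired_roots:
  assumes covered: "pos_roots M \<subseteq> fired_root ` {..<length seq}"
  shows "f_at M x = 1"
proof -
  have "ray_roots M x = {simple_root x}"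
  proof (intro equalityI subsetI)
    fix v
    assume v: "v \<in> ray_roots M x"
    then obtain w y K where K: "K > 0" "v = (\<lambda>l. K * simple_root x l)"
      using ray_rootE[OF EGCM] by blast
    obtain k where k: "k < length seq" "v = fired_root k"
      using covered v unfolding ray_roots_def by blast
    obtain j where j: "j < length seq" "simple_root x = fired_root j"
      using covered simple_root_in_pos_roots[of x M] by blast
    have "j = k"
      using fired_roots_proportional_imp_eq[OF j(1) k(1) K(1)] j(2) k(2) K(2) by simp
    then show "v \<in> {simple_root x}"
      using j(2) k(2) by simp
  qed (simp add: simple_root_in_ray_roots)
  then show ?thesis
    by (simp add: f_at_eq_card_ray_roots)
qed

lemma pos_roots_subset_fired_roots_if_f_at_1:
  assumes f: "\<forall>x. f_at M x = 1"
  shows "pos_roots M \<subseteq> fired_root ` {..<length seq}"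
proof
  fix v
  assume "v \<in> pos_roots M"
  then obtain w i where v: "v = word_act M w (simple_root i)" and "nonneg_vec v"
    unfolding pos_roots_iff roots_def by blast
  then obtain k c where k: "k < length seq" "c > 0" "v = (\<lambda>l. c * fired_root k l)"
    and c: "word_act M (rev (take k seq) @ w) (simple_root i) = (\<lambda>l. c * simple_root (seq ! k) l)"
    using nonneg_root_on_fired_ray by metis
  have "(\<lambda>l. c * simple_root (seq ! k) l) \<in> ray_roots M (seq ! k)"
    using scaled_simple_root_in_ray_roots[OF c] k(2) by simp
  then have "c = 1"
    using ray_root_eq_simple_root f scaled_simple_root_eq_iff by metis
  then show "v \<in> fired_root ` {..<length seq}"
    using k by simp
qed

lemma pos_roots_subset_fired_roots_iff: "pos_roots M \<subseteq> fired_root ` {..<length seq} \<longleftrightarrow> (\<forall>x. f_at M x = 1)"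
  using f_at_1_if_pos_roots_subset_fired_roots pos_roots_subset_fired_roots_if_f_at_1 by blast

lemma ex_game_root_iff: "(\<exists>j \<in> {1..length seq}. P (game_root M seq j)) \<longleftrightarrow> (\<exists>k < length seq. P (fired_root k))"
proof
  assume "\<exists>j \<in> {1..length seq}. P (game_root M seq j)"
  then obtain j where j: "1 \<le> j" "j \<le> length seq" "P (game_root M seq j)"
    by auto
  then obtain k where "j = Suc k"
    by (cases j) auto
  with j have "k < length seq" "P (fired_root k)"
    by (simp_all add: game_root_Suc)
  then show "\<exists>k < length seq. P (fired_root k)"
    by blast
next
  assume "\<exists>k < length seq. P (fired_root k)"
  then obtain k where "k < length seq" "P (fired_root k)"
    by blast
  then show "\<exists>j \<in> {1..length seq}. P (game_root M seq j)"
    by (intro bexI[of _ "Suc k"]) (simp_all add: game_root_Suc)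
qed

lemma root_functionals_covered_iff:
  "(\<forall>a \<in> pos_roots M. \<exists>j \<in> {1..length seq}. root_functional a = root_functional (game_root M seq j))
    \<longleftrightarrow> pos_roots M \<subseteq> fired_root ` {..<length seq}"
  unfolding ex_game_root_iff root_functional_eq_iff by blast

lemma pos_roots_subset_fired_roots_iff_card:
  assumes "finite (coxeter_group M)"
  shows "pos_roots M \<subseteq> fired_root ` {..<length seq} \<longleftrightarrow> card (pos_roots M) = length seq"
proof -
  have "card (fired_root ` {..<length seq}) = length seq"
    using card_image[OF fired_root_inj] by simp
  moreover have "fired_root ` {..<length seq} \<subseteq> pos_roots M"
    using fired_root_in_pos_roots by blast
  ultimately show ?thesis
    using card_subset_eq[OF pos_roots_finite[OF EGCM assms]] by (metis equalityI)
qed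

end

theorem theorem5p5:
  fixes M :: "'n::finite \<Rightarrow> 'n \<Rightarrow> real"
    and lam :: "'n \<Rightarrow> real"
    and seq :: "'n list"
  assumes "is_EGCM M"
    and "finite (coxeter_group M)"
    and "strongly_dominant lam"
    and "game_sequence M lam seq"
  shows "((\<forall>a \<in> pos_roots M. \<exists>j \<in> {1..length seq}.
              root_functional a = root_functional (game_root M seq j))
          \<longleftrightarrow> (\<forall>x. unital_OA_cyclic M (oa_component M x) \<and> f_at M x = 1))
       \<and> ((\<forall>x. unital_OA_cyclic M (oa_component M x) \<and> f_at M x = 1)
          \<longleftrightarrow> (\<forall>i j. \<not> odd_asymmetry M i j))
       \<and> ((\<forall>i j. \<not> odd_asymmetry M i j)
          \<longleftrightarrow> (coxeter_length M (longest_element M) = card (pos_roots M)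
               \<and> card (pos_roots M) = length seq))"
proof -
  interpret numbers_game M lam seq
    using assms(1,3,4) by unfold_locales
  have covered: "(\<forall>a \<in> pos_roots M. \<exists>j \<in> {1..length seq}.
      root_functional a = root_functional (game_root M seq j))
    \<longleftrightarrow> pos_roots M \<subseteq> fired_root ` {..<length seq}"
    by (rule root_functionals_covered_iff)
  have rays: "pos_roots M \<subseteq> fired_root ` {..<length seq} \<longleftrightarrow> (\<forall>x. f_at M x = 1)"
    by (rule pos_roots_subset_fired_roots_iff)
  have card: "pos_roots M \<subseteq> fired_root ` {..<length seq} \<longleftrightarrow> card (pos_roots M) = length seq"
    by (rule pos_roots_subset_fired_roots_iff_card[OF assms(2)])
  have unital: "(\<forall>x. unital_OA_cyclic M (oa_component M x) \<and> f_at M x = 1) \<longleftrightarrow> (\<forall>x. f_at M x = 1)"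
    using unital_OA_cyclic_if_f_at_1[OF assms(1)] by blast
  have symmetric: "(\<forall>x. f_at M x = 1) \<longleftrightarrow> (\<forall>i j. \<not> odd_asymmetry M i j)"
    using no_odd_asymmetry_if_f_at_1[OF assms(1)] f_at_1_if_no_odd_asymmetry[OF assms(1,2)] by blast
  show ?thesis
    unfolding covered rays unital symmetric coxeter_length_longest_element
    using card rays symmetric by auto
qed

end
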